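(* Let $(X_A,\sigma_A)$ and $(X_B,\sigma_B)$ be one-sided topological Markov shifts (with $A$, $B$ as in the context). Then $(X_A,\sigma_A)$ and $(X_B,\sigma_B)$ are one-sided flow equivalent if and only if they are continuously orbit equivalent.
   Context: Let $N>1$ and let $A=[A(i,j)]_{i,j=1}^N$ be an irreducible matrix with entries in $\{0,1\}$ which is not a permutation matrix; likewise let $B$ be an $M\times M$ matrix ($M>1$) with the same properties. The one-sided topological Markov shift $(X_A,\sigma_A)$ consists of the compact space $X_A$ of all sequences $(x_n)_{n\in\mathbb N}$ with $x_n\in\{1,\dots,N\}$ and $A(x_n,x_{n+1})=1$ for all $n$ (product topology), with the shift map $\sigma_A((x_n)_{n\in\mathbb N})=(x_{n+1})_{n\in\mathbb N}$; similarly $(X_B,\sigma_B)$. $\mathbb Z_+$, $\mathbb R_+$ denote nonnegative integers and nonnegative reals. Cohomology: $H^A$ is the quotient of the group $C(X_A,\mathbb Z)$ of continuous integer-valued functions by the subgroup $\{g-g\circ\sigma_A : g\in C(X_A,\mathbb Z)\}$; $[f]$ denotes the class of $f$; $H^A_+=\{[f]: f\in C(X_A,\mathbb Z_+)\}$. An element $[f]\in H^A_+$ is an order unit if for every $[g]\in H^A$ there is $n\in\mathbb N$ with $n[f]-[g]\in H^A_+$. For a function $f$ on $X_A$ and $m\in\mathbb Z_+$, $f^m(x)=\sum_{i=0}^{m-1}f(\sigma_A^i(x))$. Same notions for $B$. Suspension triplet: a triple $(l,k,b)$ with $l,k\in C(X_A,\mathbb R_+)$, $b\in C(X_A,\mathbb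 R)$ such that (1) $c:=l-k$ is integer-valued and $[c]\in H^A_+$ is an order unit, and (2) $l-b$ and $k-b\circ\sigma_A$ take values in $\mathbb Z_+$. Let $X^{\mathbb R}_{A,b}=\{(x,r)\in X_A\times\mathbb R: r\ge b(x)\}$ and let $\sim_{l,k}$ be the equivalence relation on it generated by $(x,r)\sim_{l,k}(\sigma_A(x),r-c(x))$ whenever $r\ge l(x)$. The one-sided suspension $S^{l,k}_{A,b}$ is the quotient space $X^{\mathbb R}_{A,b}/\!\sim_{l,k}$, with $[x,r]$ the class of $(x,r)$, equipped with the flow $\phi_{A,t}([x,r])=[x,r+t]$, $t\in\mathbb R_+$, and base map $b_A:X_A\to S^{l,k}_{A,b}$, $b_A(x)=[x,b(x)]$. The standard suspension is $S^1_A:=S^{1,0}_{A,0}$ (triplet $(1,0,0)$) with standard base map $s_A(x)=[x,0]$. One-sided flow equivalence: $(X_A,\sigma_A)$ and $(X_B,\sigma_B)$ are one-sided flow equivalent if there exist suspension triplets $(l_1,k_1,b_1)$ for $(X_A,\sigma_A)$ and $(l_2,k_2,b_2)$ for $(X_B,\sigma_B)$, a homeomorphism $h:X_A\to X_B$ and continuous maps $\Phi_1:S^{l_1,k_1}_{A,b_1}\to S^1_B$, $\Phi_2:S^{l_2,k_2}_{B,b_2}\to S^1_A$ with $\Phi_1\circ\phi_{A,t}=\phi_{B,t}\circ\Phi_1$, $\Phi_2\circ\phi_{B,t}=\phi_{A,t}\circ\Phi_2$ for all $t\in\mathbb R_+$, $\Phi_1\circ b_{1,A}=s_B\circ h$ and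 $\Phi_2\circ b_{2,B}=s_A\circ h^{-1}$, where $b_{1,A}(x)=[x,b_1(x)]$ and $b_{2,B}(y)=[y,b_2(y)]$. Continuous orbit equivalence: there exist a homeomorphism $h:X_A\to X_B$ and continuous $k_1,l_1:X_A\to\mathbb Z_+$, $k_2,l_2:X_B\to\mathbb Z_+$ with $\sigma_B^{k_1(x)}(h(\sigma_A(x)))=\sigma_B^{l_1(x)}(h(x))$ for all $x\in X_A$ and $\sigma_A^{k_2(y)}(h^{-1}(\sigma_B(y)))=\sigma_A^{l_2(y)}(h^{-1}(y))$ for all $y\in X_B$. *)

theory Defs
  imports "HOL-Analysis.Analysis"
begin

text \<open>An N x N matrix is represented as a function nat => nat => nat, indices in {1..N}.\<close>

fun mat_pow :: "nat \<Rightarrow> (nat \<Rightarrow> nat \<Rightarrow> nat) \<Rightarrow> nat \<Rightarrow> nat \<Rightarrow> nat \<Rightarrow> nat" where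
  "mat_pow N A 0 i j = (if i = j then 1 else 0)"
| "mat_pow N A (Suc n) i j = (\<Sum>m\<in>{1..N}. mat_pow N A n i m * A m j)"

definition zero_one_matrix :: "nat \<Rightarrow> (nat \<Rightarrow> nat \<Rightarrow> nat) \<Rightarrow> bool" where
  "zero_one_matrix N A \<longleftrightarrow> (\<forall>i\<in>{1..N}. \<forall>j\<in>{1..N}. A i j \<in> {0,1})"

definition irreducible_matrix :: "nat \<Rightarrow> (nat \<Rightarrow> nat \<Rightarrow> nat) \<Rightarrow> bool" where
  "irreducible_matrix N A \<longleftrightarrow> (\<forall>i\<in>{1..N}. \<forall>j\<in>{1..N}. \<exists>n>0. mat_pow N A n i j > 0)"

definition permutation_matrix :: "nat \<Rightarrow> (nat \<Rightarrow> nat \<Rightarrow> nat) \<Rightarrow> bool" where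
  "permutation_matrix N A \<longleftrightarrow> zero_one_matrix N A \<and>
     (\<forall>i\<in>{1..N}. card {j\<in>{1..N}. A i j = 1} = 1) \<and>
     (\<forall>j\<in>{1..N}. card {i\<in>{1..N}. A i j = 1} = 1)"

definition admissible_matrix :: "nat \<Rightarrow> (nat \<Rightarrow> nat \<Rightarrow> nat) \<Rightarrow> bool" where
  "admissible_matrix N A \<longleftrightarrow> N > 1 \<and> zero_one_matrix N A \<and> irreducible_matrix N A
     \<and> \<not> permutation_matrix N A"

text \<open>The shift space X_A, a subset of nat => nat carrying the product topology
  (nat is discrete).\<close>
definition shift_space :: "nat \<Rightarrow> (nat \<Rightarrow> nat \<Rightarrow> nat) \<Rightarrow> (nat \<Rightarrow> nat) set" where
  "shift_space N A = {x. \<forall>n. x n \<in> {1..N} \<and> A (x n) (x (Suc n)) = 1}"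

definition shift :: "(nat \<Rightarrow> nat) \<Rightarrow> (nat \<Rightarrow> nat)" where
  "shift x = (\<lambda>n. x (Suc n))"

definition cohomologous :: "(nat \<Rightarrow> nat) set \<Rightarrow> ((nat \<Rightarrow> nat) \<Rightarrow> int) \<Rightarrow> ((nat \<Rightarrow> nat) \<Rightarrow> int) \<Rightarrow> bool" where
  "cohomologous X f g \<longleftrightarrow>
     (\<exists>u. continuous_on X u \<and> (\<forall>x\<in>X. f x - g x = u x - u (shift x)))"

definition in_pos_cone :: "(nat \<Rightarrow> nat) set \<Rightarrow> ((nat \<Rightarrow> nat) \<Rightarrow> int) \<Rightarrow> bool" where
  "in_pos_cone X f \<longleftrightarrow>
     (\<exists>g. continuous_on X g \<and> (\<forall>x\<in>X. g x \<ge> 0) \<and> cohomologous X f g)"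

definition order_unit :: "(nat \<Rightarrow> nat) set \<Rightarrow> ((nat \<Rightarrow> nat) \<Rightarrow> int) \<Rightarrow> bool" where
  "order_unit X f \<longleftrightarrow> continuous_on X f \<and> in_pos_cone X f \<and>
     (\<forall>g. continuous_on X g \<longrightarrow> (\<exists>n::nat. in_pos_cone X (\<lambda>x. int n * f x - g x)))"

definition susp_triplet ::
  "(nat \<Rightarrow> nat) set \<Rightarrow> ((nat \<Rightarrow> nat) \<Rightarrow> real) \<Rightarrow> ((nat \<Rightarrow> nat) \<Rightarrow> real) \<Rightarrow> ((nat \<Rightarrow> nat) \<Rightarrow> real) \<Rightarrow> bool" where
  "susp_triplet X l k b \<longleftrightarrow>
     continuous_on X l \<and> continuous_on X k \<and> continuous_on X b \<and>
     (\<forall>x\<in>X. l x \<ge> 0 \<and> k x \<ge> 0) \<and>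
     (\<exists>c. (\<forall>x\<in>X. l x - k x = of_int (c x)) \<and> order_unit X c) \<and>
     (\<forall>x\<in>X. l x - b x \<in> \<nat> \<and> k x - b (shift x) \<in> \<nat>)"

definition susp_domain :: "(nat \<Rightarrow> nat) set \<Rightarrow> ((nat \<Rightarrow> nat) \<Rightarrow> real) \<Rightarrow> ((nat \<Rightarrow> nat) \<times> real) set" where
  "susp_domain X b = {(x, r). x \<in> X \<and> r \<ge> b x}"

definition susp_gen ::
  "(nat \<Rightarrow> nat) set \<Rightarrow> ((nat \<Rightarrow> nat) \<Rightarrow> real) \<Rightarrow> ((nat \<Rightarrow> nat) \<Rightarrow> real) \<Rightarrow> ((nat \<Rightarrow> nat) \<Rightarrow> real)
   \<Rightarrow> (((nat \<Rightarrow> nat) \<times> real) \<times> ((nat \<Rightarrow> nat) \<times> real)) set" where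
  "susp_gen X l k b = {((x, r), (shift x, r - (l x - k x))) | x r. (x, r) \<in> susp_domain X b \<and> r \<ge> l x}"

definition susp_rel ::
  "(nat \<Rightarrow> nat) set \<Rightarrow> ((nat \<Rightarrow> nat) \<Rightarrow> real) \<Rightarrow> ((nat \<Rightarrow> nat) \<Rightarrow> real) \<Rightarrow> ((nat \<Rightarrow> nat) \<Rightarrow> real)
   \<Rightarrow> (((nat \<Rightarrow> nat) \<times> real) \<times> ((nat \<Rightarrow> nat) \<times> real)) set" where
  "susp_rel X l k b = ((susp_gen X l k b \<union> (susp_gen X l k b)\<inverse>)\<^sup>*) \<inter> (susp_domain X b \<times> susp_domain X b)"

definition quotient_top :: "'a::topological_space set \<Rightarrow> ('a \<times> 'a) set \<Rightarrow> 'a set topology" where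
  "quotient_top S E = topology (\<lambda>U. U \<subseteq> S // E \<and> openin (top_of_set S) (\<Union>U))"

text \<open>The one-sided suspension S^{l,k}_{A,b} as a topological space (points = equivalence classes).\<close>
definition suspension ::
  "(nat \<Rightarrow> nat) set \<Rightarrow> ((nat \<Rightarrow> nat) \<Rightarrow> real) \<Rightarrow> ((nat \<Rightarrow> nat) \<Rightarrow> real) \<Rightarrow> ((nat \<Rightarrow> nat) \<Rightarrow> real)
   \<Rightarrow> ((nat \<Rightarrow> nat) \<times> real) set topology" where
  "suspension X l k b = quotient_top (susp_domain X b) (susp_rel X l k b)"

definition susp_class ::
  "(nat \<Rightarrow> nat) set \<Rightarrow> ((nat \<Rightarrow> nat) \<Rightarrow> real) \<Rightarrow> ((nat \<Rightarrow> nat) \<Rightarrow> real) \<Rightarrow> ((nat \<Rightarrow> nat) \<Rightarrow> real)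
   \<Rightarrow> (nat \<Rightarrow> nat) \<Rightarrow> real \<Rightarrow> ((nat \<Rightarrow> nat) \<times> real) set" where
  "susp_class X l k b x r = susp_rel X l k b `` {(x, r)}"

text \<open>The flow phi_t([x,r]) = [x,r+t], applied to a class p (well defined: the result is the
  class of (x, r+t) for any representative (x,r) of p).\<close>
definition susp_flow ::
  "(nat \<Rightarrow> nat) set \<Rightarrow> ((nat \<Rightarrow> nat) \<Rightarrow> real) \<Rightarrow> ((nat \<Rightarrow> nat) \<Rightarrow> real) \<Rightarrow> ((nat \<Rightarrow> nat) \<Rightarrow> real)
   \<Rightarrow> real \<Rightarrow> ((nat \<Rightarrow> nat) \<times> real) set \<Rightarrow> ((nat \<Rightarrow> nat) \<times> real) set" where
  "susp_flow X l k b t p = susp_rel X l k b `` ((\<lambda>(x, r). (x, r + t)) ` p)"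

abbreviation std_susp :: "(nat \<Rightarrow> nat) set \<Rightarrow> ((nat \<Rightarrow> nat) \<times> real) set topology" where
  "std_susp X \<equiv> suspension X (\<lambda>_. 1) (\<lambda>_. 0) (\<lambda>_. 0)"

abbreviation std_flow :: "(nat \<Rightarrow> nat) set \<Rightarrow> real \<Rightarrow> ((nat \<Rightarrow> nat) \<times> real) set \<Rightarrow> ((nat \<Rightarrow> nat) \<times> real) set" where
  "std_flow X \<equiv> susp_flow X (\<lambda>_. 1) (\<lambda>_. 0) (\<lambda>_. 0)"

abbreviation std_base :: "(nat \<Rightarrow> nat) set \<Rightarrow> (nat \<Rightarrow> nat) \<Rightarrow> ((nat \<Rightarrow> nat) \<times> real) set" where
  "std_base X x \<equiv> susp_class X (\<lambda>_. 1) (\<lambda>_. 0) (\<lambda>_. 0) x 0"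

definition one_sided_flow_equiv ::
  "nat \<Rightarrow> (nat \<Rightarrow> nat \<Rightarrow> nat) \<Rightarrow> nat \<Rightarrow> (nat \<Rightarrow> nat \<Rightarrow> nat) \<Rightarrow> bool" where
  "one_sided_flow_equiv N A M B \<longleftrightarrow>
    (let XA = shift_space N A; XB = shift_space M B in
     \<exists>l1 k1 b1 l2 k2 b2 h h' \<Phi>1 \<Phi>2.
       susp_triplet XA l1 k1 b1 \<and> susp_triplet XB l2 k2 b2 \<and>
       homeomorphism XA XB h h' \<and>
       continuous_map (suspension XA l1 k1 b1) (std_susp XB) \<Phi>1 \<and>
       continuous_map (suspension XB l2 k2 b2) (std_susp XA) \<Phi>2 \<and>
       (\<forall>t\<ge>0. \<forall>p\<in>topspace (suspension XA l1 k1 b1).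
          \<Phi>1 (susp_flow XA l1 k1 b1 t p) = std_flow XB t (\<Phi>1 p)) \<and>
       (\<forall>t\<ge>0. \<forall>p\<in>topspace (suspension XB l2 k2 b2).
          \<Phi>2 (susp_flow XB l2 k2 b2 t p) = std_flow XA t (\<Phi>2 p)) \<and>
       (\<forall>x\<in>XA. \<Phi>1 (susp_class XA l1 k1 b1 x (b1 x)) = std_base XB (h x)) \<and>
       (\<forall>y\<in>XB. \<Phi>2 (susp_class XB l2 k2 b2 y (b2 y)) = std_base XA (h' y)))"

definition cont_orbit_equiv ::
  "nat \<Rightarrow> (nat \<Rightarrow> nat \<Rightarrow> nat) \<Rightarrow> nat \<Rightarrow> (nat \<Rightarrow> nat \<Rightarrow> nat) \<Rightarrow> bool" where
  "cont_orbit_equiv N A M B \<longleftrightarrow>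
    (let XA = shift_space N A; XB = shift_space M B in
     \<exists>h h' (k1 :: (nat \<Rightarrow> nat) \<Rightarrow> nat) l1 (k2 :: (nat \<Rightarrow> nat) \<Rightarrow> nat) l2.
       homeomorphism XA XB h h' \<and>
       continuous_on XA k1 \<and> continuous_on XA l1 \<and>
       continuous_on XB k2 \<and> continuous_on XB l2 \<and>
       (\<forall>x\<in>XA. (shift ^^ k1 x) (h (shift x)) = (shift ^^ l1 x) (h x)) \<and>
       (\<forall>y\<in>XB. (shift ^^ k2 y) (h' (shift y)) = (shift ^^ l2 y) (h' y)))"

end

theory Submission
  imports Defs
begin

text \<open>
  A flow equivalence yields the orbit cocycle directly: flowing the base point \<open>[x, b x]\<close>
  for time \<open>l x - b x\<close> reaches \<open>[x, l x] = [\<sigma> x, k x]\<close>, the base point over \<open>\<sigma> x\<close> flowed for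
  time \<open>k x - b (\<sigma> x)\<close>; in the standard suspension over \<open>X\<^sub>B\<close> this reads
  \<open>\<sigma>^(k\<^sub>1 x) (h (\<sigma> x)) = \<sigma>^(l\<^sub>1 x) (h x)\<close> with \<open>l\<^sub>1 = l - b\<close> and \<open>k\<^sub>1 = k - b \<circ> \<sigma>\<close>.

  Conversely, a continuous orbit equivalence \<open>(h, k\<^sub>1, l\<^sub>1)\<close> gives the triplet \<open>(l\<^sub>1, k\<^sub>1, 0)\<close>,
  and \<open>(x, r) \<mapsto> (h x, r)\<close> induces a flow conjugacy because the cocycle identity is exactly
  what identifies the two ends of a generating edge. The substantial point is that
  \<open>l\<^sub>1 - k\<^sub>1\<close> is an order unit, which follows once its Birkhoff sums are uniformly positive.
  This is a counting argument: \<open>h\<close> maps cylinders into cylinders, the iterated cocycle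
  relation shifts word lengths by \<open>k\<^sub>1\<^sup>n - l\<^sub>1\<^sup>n\<close>, and in an irreducible non-permutation shift the
  number of admissible words grows strictly after a bounded delay, so \<open>k\<^sub>1\<^sup>n x \<ge> l\<^sub>1\<^sup>n x\<close> would
  contradict the injectivity of \<open>h\<close>.
\<close>

section \<open>Shift spaces\<close>

lemma funpow_shift: "(shift ^^ n) x = (\<lambda>i. x (i + n))"
  by (induction n arbitrary: x) (auto simp: shift_def)

lemma funpow_shift_apply: "(shift ^^ n) x i = x (i + n)"
  by (simp add: funpow_shift)

lemma shift_space_symbol: "x \<in> shift_space N A \<Longrightarrow> x n \<in> {1..N}"
  and shift_space_transition: "x \<in> shift_space N A \<Longrightarrow> A (x n) (x (Suc n)) = 1"
  by (auto simp: shift_space_def)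

lemma shift_space_funpow: "x \<in> shift_space N A \<Longrightarrow> (shift ^^ n) x \<in> shift_space N A"
  by (auto simp: shift_space_def funpow_shift)

lemma shift_space_shift: "x \<in> shift_space N A \<Longrightarrow> shift x \<in> shift_space N A"
  using shift_space_funpow[of x N A 1] by simp

lemma continuous_on_funpow_shift: "continuous_on S (shift ^^ n)"
  unfolding funpow_shift
  by (intro continuous_on_coordinatewise_then_product
      continuous_on_product_coordinates[THEN continuous_on_subset]) auto

lemma continuous_on_shift: "continuous_on S shift"
  using continuous_on_funpow_shift[of S 1] by simp

definition agree :: "nat \<Rightarrow> (nat \<Rightarrow> nat) \<Rightarrow> (nat \<Rightarrow> nat) \<Rightarrow> bool" where
  "agree n x y \<longleftrightarrow> (\<forall>i<n. x i = y i)"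

definition glue :: "nat \<Rightarrow> (nat \<Rightarrow> nat) \<Rightarrow> (nat \<Rightarrow> nat) \<Rightarrow> (nat \<Rightarrow> nat)" where
  "glue n f y = (\<lambda>i. if i < n then f i else y (i - n))"

lemma agree_refl [simp]: "agree n x x"
  and agree_sym: "agree n x y \<Longrightarrow> agree n y x"
  and agree_trans: "agree n x y \<Longrightarrow> agree n y z \<Longrightarrow> agree n x z"
  and agree_mono: "agree n x y \<Longrightarrow> m \<le> n \<Longrightarrow> agree m x y"
  by (auto simp: agree_def)

lemma cylinder_condition_mono:
  assumes "\<forall>x\<in>S. \<forall>z\<in>S. agree n z x \<longrightarrow> P z x" "n \<le> m"
  shows "\<forall>x\<in>S. \<forall>z\<in>S. agree m z x \<longrightarrow> P z x"
  using assms agree_mono by blast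

lemma agree_Suc_iff: "agree (Suc n) x y \<longleftrightarrow> agree n x y \<and> x n = y n"
  by (auto simp: agree_def less_Suc_eq)

lemma agree_funpow_shift:
  "agree (n + m) x y \<Longrightarrow> i \<le> n \<Longrightarrow> agree m ((shift ^^ i) x) ((shift ^^ i) y)"
  by (auto simp: agree_def funpow_shift)

lemma funpow_shift_glue [simp]: "(shift ^^ n) (glue n f y) = y"
  by (simp add: funpow_shift glue_def)

lemma agree_glue: "agree n (glue n f y) f"
  by (simp add: agree_def glue_def)

lemma glue_funpow_shift [simp]: "glue n x ((shift ^^ n) x) = x"
  by (auto simp: glue_def funpow_shift)

lemma glue_cong: "agree n f g \<Longrightarrow> glue n f y = glue n g y"
  by (auto simp: glue_def agree_def)

lemma glue_in_shift_space:
  assumes "\<forall>i<n. f i \<in> {1..N}" "\<forall>i. Suc i < n \<longrightarrow> A (f i) (f (Suc i)) = 1"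
    and "y \<in> shift_space N A" "0 < n \<Longrightarrow> A (f (n - 1)) (y 0) = 1"
  shows "glue n f y \<in> shift_space N A"
  unfolding shift_space_def
proof (intro CollectI allI conjI)
  fix i
  show "glue n f y i \<in> {1..N}"
    using assms(1) shift_space_symbol[OF assms(3)] by (simp add: glue_def)
  consider "Suc i < n" | "Suc i = n" | "n \<le> i" by linarith
  then show "A (glue n f y i) (glue n f y (Suc i)) = 1"
  proof cases
    case 3
    then have "Suc i - n = Suc (i - n)" by simp
    then show ?thesis using 3 shift_space_transition[OF assms(3)] by (simp add: glue_def)
  qed (use assms(2,4) in \<open>auto simp: glue_def\<close>)
qed

lemma glue_in_shift_space_point:
  assumes "x \<in> shift_space N A" "y \<in> shift_space N A" "y 0 = x n"
  shows "glue n x y \<in> shift_space N A"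
proof (rule glue_in_shift_space[OF _ _ assms(2)])
  show "A (x (n - 1)) (y 0) = 1" if "0 < n"
    using that assms(3) shift_space_transition[OF assms(1), of "n - 1"] by simp
qed (use assms(1) shift_space_symbol shift_space_transition in auto)

lemma card_cylinder_funpow_shift:
  assumes x: "x \<in> shift_space N A" and "0 < R"
  shows "card {u \<in> shift_space N A. agree (n + R) u x \<and> P ((shift ^^ n) u)}
       = card {w \<in> shift_space N A. agree R w ((shift ^^ n) x) \<and> P w}"
proof -
  let ?S = "{u \<in> shift_space N A. agree (n + R) u x \<and> P ((shift ^^ n) u)}"
  have inj: "inj_on (shift ^^ n) ?S"
  proof (rule inj_onI)
    fix u u' assume "u \<in> ?S" "u' \<in> ?S" and eq: "(shift ^^ n) u = (shift ^^ n) u'"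
    then have "agree n u x" "agree n u' x" using agree_mono by auto
    then have "agree n u u'" using agree_sym agree_trans by blast
    then have "glue n u ((shift ^^ n) u) = glue n u' ((shift ^^ n) u')"
      unfolding eq by (rule glue_cong)
    then show "u = u'" by simp
  qed
  moreover have "(shift ^^ n) ` ?S = {w \<in> shift_space N A. agree R w ((shift ^^ n) x) \<and> P w}"
  proof
    show "(shift ^^ n) ` ?S \<subseteq> {w \<in> shift_space N A. agree R w ((shift ^^ n) x) \<and> P w}"
      using shift_space_funpow agree_funpow_shift[of n R _ x n] by auto
    show "{w \<in> shift_space N A. agree R w ((shift ^^ n) x) \<and> P w} \<subseteq> (shift ^^ n) ` ?S"
    proof clarify
      fix w assume w: "w \<in> shift_space N A" "agree R w ((shift ^^ n) x)" "P w"
      have "w 0 = x n" using w(2) \<open>0 < R\<close> by (simp add: agree_def funpow_shift_apply)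
      then have "glue n x w \<in> shift_space N A" using x w(1) by (rule glue_in_shift_space_point[rotated 2])
      moreover have "agree (n + R) (glue n x w) x"
        using w(2) by (auto simp: agree_def glue_def funpow_shift_apply)
      ultimately have "glue n x w \<in> ?S" using w(3) by simp
      then show "w \<in> (shift ^^ n) ` ?S" by (intro image_eqI[where x = "glue n x w"]) simp_all
    qed
  qed
  ultimately show ?thesis using card_image[OF inj] by simp
qed

lemma card_cylinder_image_le:
  assumes "inj_on f S" "f ` S \<subseteq> T" "finite {z \<in> T. agree m z (f p) \<and> Q z}"
    and "\<forall>u\<in>S. agree n u p \<longrightarrow> agree m (f u) (f p)"
  shows "card {u \<in> S. agree n u p \<and> Q (f u)} \<le> card {z \<in> T. agree m z (f p) \<and> Q z}"
  using assms by (intro card_inj_on_le) (auto intro: inj_on_subset)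

lemma open_cylinder: "open {z. agree n z x}"
proof -
  have "open {f. \<forall>i\<in>{..<n}. f (id i) \<in> {x i}}"
    by (rule product_topology_basis') (simp_all add: open_discrete)
  moreover have "{f. \<forall>i\<in>{..<n}. f (id i) \<in> {x i}} = {z. agree n z x}"
    by (auto simp: agree_def)
  ultimately show ?thesis by simp
qed

lemma cylinder_subset_open:
  assumes "open U" "(x :: nat \<Rightarrow> nat) \<in> U"
  shows "\<exists>n. {z. agree n z x} \<subseteq> U"
proof -
  have "openin (product_topology (\<lambda>i. euclidean) UNIV) U"
    using assms(1) by (simp add: open_fun_def)
  from product_topology_open_contains_basis[OF this assms(2)] obtain Xs where
    Xs: "x \<in> (\<Pi>\<^sub>E i\<in>UNIV. Xs i)" "finite {i. Xs i \<noteq> UNIV}" "(\<Pi>\<^sub>E i\<in>UNIV. Xs i) \<subseteq> U"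
    by auto
  define n where "n = Suc (Max (insert 0 {i. Xs i \<noteq> UNIV}))"
  have "z i \<in> Xs i" if "agree n z x" for z i
  proof (cases "Xs i = UNIV")
    case False
    then have "i < n" using Xs(2) unfolding n_def by (simp add: le_imp_less_Suc)
    then show ?thesis using that Xs(1) by (auto simp: agree_def)
  qed simp
  then have "{z. agree n z x} \<subseteq> (\<Pi>\<^sub>E i\<in>UNIV. Xs i)" by auto
  with Xs(3) show ?thesis by blast
qed

lemma closed_shift_space: "closed (shift_space N A)"
proof -
  have "\<exists>T. open T \<and> y \<in> T \<and> T \<subseteq> - shift_space N A" if y: "y \<in> - shift_space N A" for y
  proof -
    obtain n where n: "\<not> (y n \<in> {1..N} \<and> A (y n) (y (Suc n)) = 1)"
      using y unfolding shift_space_def by blast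
    have "{z. agree (Suc (Suc n)) z y} \<subseteq> - shift_space N A"
    proof
      fix z assume "z \<in> {z. agree (Suc (Suc n)) z y}"
      then have "z n = y n" "z (Suc n) = y (Suc n)" by (auto simp: agree_def)
      then show "z \<in> - shift_space N A"
        using n shift_space_symbol[of z N A n] shift_space_transition[of z N A n] by auto
    qed
    then show ?thesis using open_cylinder[of "Suc (Suc n)" y] by auto
  qed
  then show ?thesis unfolding closed_def by (subst open_subopen) blast
qed

lemma compact_shift_space: "compact (shift_space N A)"
proof -
  have "compactin (product_topology (\<lambda>i. euclidean) UNIV) (PiE UNIV (\<lambda>_::nat. {1..N}))"
    by (simp add: compactin_PiE finite_imp_compact)
  then have "compact (PiE UNIV (\<lambda>_::nat. {1..N}) \<inter> shift_space N A)"
    by (simp add: euclidean_product_topology compact_Int_closed closed_shift_space)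
  moreover have "PiE UNIV (\<lambda>_::nat. {1..N}) \<inter> shift_space N A = shift_space N A"
    unfolding shift_space_def by auto
  ultimately show ?thesis by simp
qed

lemma shift_space_locally_constant:
  fixes f :: "(nat \<Rightarrow> nat) \<Rightarrow> 'b::discrete_topology"
  assumes "continuous_on (shift_space N A) f"
  shows "\<exists>n. \<forall>x\<in>shift_space N A. \<forall>z\<in>shift_space N A. agree n z x \<longrightarrow> f z = f x"
proof -
  let ?X = "shift_space N A"
  have "\<exists>n. {z. agree n z x} \<inter> ?X \<subseteq> f -` {f x}" if x: "x \<in> ?X" for x
  proof -
    obtain U where U: "open U" "U \<inter> ?X = f -` {f x} \<inter> ?X"
      using assms open_discrete[of "{f x}"] unfolding continuous_on_open_invariant by blast
    moreover obtain n where "{z. agree n z x} \<subseteq> U"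
      using cylinder_subset_open[OF U(1)] x U(2) by blast
    ultimately show ?thesis by blast
  qed
  then have "\<forall>x\<in>?X. \<exists>n. {z. agree n z x} \<inter> ?X \<subseteq> f -` {f x}" by blast
  then obtain m where m: "\<forall>x\<in>?X. {z. agree (m x) z x} \<inter> ?X \<subseteq> f -` {f x}"
    by (rule bchoice[elim_format]) blast
  have "?X \<subseteq> (\<Union>x\<in>?X. {z. agree (m x) z x})" by auto
  from compactE_image[OF compact_shift_space open_cylinder this]
  obtain C where C: "C \<subseteq> ?X" "finite C" "?X \<subseteq> (\<Union>c\<in>C. {z. agree (m c) z c})" .
  define n where "n = Max (insert 0 (m ` C))"
  have "f z = f x" if "x \<in> ?X" "z \<in> ?X" "agree n z x" for x z
  proof -
    from C(3) that(1) obtain c where c: "c \<in> C" "agree (m c) x c" by auto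
    have "m c \<le> n" unfolding n_def using C(2) c(1) by simp
    then have "agree (m c) z c" using agree_trans[OF agree_mono[OF that(3)] c(2)] by simp
    moreover have "{z. agree (m c) z c} \<inter> ?X \<subseteq> f -` {f c}" using m c C(1) by blast
    ultimately have "f z = f c" "f x = f c" using c(2) that(1,2) by auto
    then show ?thesis by simp
  qed
  then show ?thesis by blast
qed

lemma shift_space_uniformly_continuous:
  assumes "continuous_on (shift_space N A) h"
  shows "\<exists>n. \<forall>x\<in>shift_space N A. \<forall>z\<in>shift_space N A. agree n z x \<longrightarrow> agree m (h z) (h x)"
proof (induction m)
  case (Suc m)
  then obtain n1 where n1:
    "\<forall>x\<in>shift_space N A. \<forall>z\<in>shift_space N A. agree n1 z x \<longrightarrow> agree m (h z) (h x)"
    by blast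
  obtain n2 where n2: "\<forall>x\<in>shift_space N A. \<forall>z\<in>shift_space N A. agree n2 z x \<longrightarrow> h z m = h x m"
    using shift_space_locally_constant[OF continuous_on_product_then_coordinatewise[OF assms]]
    by blast
  have "agree (Suc m) (h z) (h x)"
    if "x \<in> shift_space N A" "z \<in> shift_space N A" "agree (max n1 n2) z x" for x z
  proof -
    have "agree n1 z x" "agree n2 z x" using agree_mono[OF that(3)] by auto
    then have "agree m (h z) (h x)" "h z m = h x m" using that(1,2) n1 n2 by blast+
    then show ?thesis by (simp add: agree_Suc_iff)
  qed
  then show ?case by blast
qed (simp add: agree_def)

lemma continuous_on_discrete_binop:
  fixes f :: "'a::topological_space \<Rightarrow> 'b::discrete_topology" and g :: "'a \<Rightarrow> 'c::discrete_topology"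
  assumes "continuous_on S f" "continuous_on S g"
  shows "continuous_on S (\<lambda>x. H (f x) (g x) :: 'd::topological_space)"
proof -
  have "open U" for U :: "('b \<times> 'c) set"
  proof -
    have "U = (\<Union>p\<in>U. {fst p} \<times> {snd p})" by auto
    also have "open \<dots>" by (intro open_UN ballI open_Times open_discrete)
    finally show ?thesis .
  qed
  then have "continuous_on UNIV (case_prod H)"
    by (simp add: continuous_on_open_invariant)
  from continuous_on_compose2[OF this continuous_on_Pair[OF assms]] show ?thesis by simp
qed

section \<open>Quotient topologies and suspensions\<close>

lemma istopology_quotient_top:
  assumes "equiv S E"
  shows "istopology (\<lambda>U. U \<subseteq> S // E \<and> openin (top_of_set S) (\<Union>U))"
proof -
  have "U \<inter> V \<subseteq> S // E \<and> openin (top_of_set S) (\<Union>(U \<inter> V))"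
    if U: "U \<subseteq> S // E" "openin (top_of_set S) (\<Union>U)"
      and V: "V \<subseteq> S // E" "openin (top_of_set S) (\<Union>V)" for U V
  proof -
    have "\<Union>(U \<inter> V) = \<Union>U \<inter> \<Union>V"
      using U V quotient_disj[OF assms] by blast
    then show ?thesis using U V by auto
  qed
  moreover have "\<Union>K \<subseteq> S // E \<and> openin (top_of_set S) (\<Union>(\<Union>K))"
    if K: "\<forall>U\<in>K. U \<subseteq> S // E \<and> openin (top_of_set S) (\<Union>U)" for K
  proof -
    have "\<Union>(\<Union>K) = \<Union>(Union ` K)" by auto
    moreover have "openin (top_of_set S) (\<Union>(Union ` K))"
      using K by (intro openin_Union) auto
    ultimately show ?thesis using K by auto
  qed
  ultimately show ?thesis unfolding istopology_def by blast
qed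

lemma openin_quotient_top:
  assumes "equiv S E"
  shows "openin (quotient_top S E) U \<longleftrightarrow> U \<subseteq> S // E \<and> openin (top_of_set S) (\<Union>U)"
  unfolding quotient_top_def using topology_inverse'[OF istopology_quotient_top[OF assms]] by simp

lemma topspace_quotient_top:
  assumes "equiv S E"
  shows "topspace (quotient_top S E) = S // E"
proof
  show "topspace (quotient_top S E) \<subseteq> S // E"
    unfolding topspace_def using openin_quotient_top[OF assms] by auto
  have "openin (quotient_top S E) (S // E)"
    using openin_quotient_top[OF assms] Union_quotient[OF assms] by auto
  then show "S // E \<subseteq> topspace (quotient_top S E)" by (rule openin_subset)
qed

lemma quotient_map_class:
  assumes "equiv S E" "equiv S' E'" "p \<in> S"
    and respects: "\<And>p q. (p, q) \<in> E \<Longrightarrow> (H p, H q) \<in> E'"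
  shows "E' `` (H ` (E `` {p})) = E' `` {H p}"
proof
  have "(p, p) \<in> E" using assms(1,3) by (simp add: equiv_def refl_on_def)
  then show "E' `` {H p} \<subseteq> E' `` (H ` (E `` {p}))" by blast
  show "E' `` (H ` (E `` {p})) \<subseteq> E' `` {H p}"
    using respects equivE[OF assms(2)] unfolding trans_def by blast
qed

lemma Union_quotient_map_preimage:
  assumes E: "equiv S E" and E': "equiv S' E'" and U: "U \<subseteq> S' // E'"
    and respects: "\<And>p q. (p, q) \<in> E \<Longrightarrow> (H p, H q) \<in> E'"
  shows "\<Union>{P \<in> S // E. E' `` (H ` P) \<in> U} = S \<inter> H -` \<Union>U"
proof
  have H_in_class: "H q \<in> E' `` {H q}" if "q \<in> S" for q
    using that respects E E' by (force simp: equiv_def refl_on_def)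
  show "\<Union>{P \<in> S // E. E' `` (H ` P) \<in> U} \<subseteq> S \<inter> H -` \<Union>U"
  proof
    fix q assume "q \<in> \<Union>{P \<in> S // E. E' `` (H ` P) \<in> U}"
    then obtain P where P: "P \<in> S // E" "E' `` (H ` P) \<in> U" "q \<in> P" by blast
    then obtain x where "x \<in> S" "P = E `` {x}" "(x, q) \<in> E" by (auto elim!: quotientE)
    then have q: "q \<in> S" "P = E `` {q}"
      using E equiv_class_eq[OF E] by (auto simp: equiv_def)
    then show "q \<in> S \<inter> H -` \<Union>U"
      using P(2) H_in_class quotient_map_class[where H = H, OF E E' q(1) respects] by auto
  qed
  show "S \<inter> H -` \<Union>U \<subseteq> \<Union>{P \<in> S // E. E' `` (H ` P) \<in> U}"
  proof
    fix q assume q: "q \<in> S \<inter> H -` \<Union>U"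
    then obtain Q where Q: "Q \<in> U" "H q \<in> Q" by blast
    then obtain y where "Q = E' `` {y}" "(y, H q) \<in> E'"
      using U by (auto elim!: quotientE)
    then have "Q = E' `` {H q}" using equiv_class_eq[OF E'] by simp
    then have "E' `` (H ` (E `` {q})) \<in> U"
      using Q(1) q quotient_map_class[where H = H, OF E E' _ respects] by auto
    moreover have "q \<in> E `` {q}" using q E by (auto simp: equiv_def refl_on_def)
    ultimately show "q \<in> \<Union>{P \<in> S // E. E' `` (H ` P) \<in> U}"
      using q by (auto intro: quotientI)
  qed
qed

lemma continuous_map_quotient_top:
  assumes E: "equiv S E" and E': "equiv S' E'" and cont: "continuous_on S H"
    and respects: "\<And>p q. (p, q) \<in> E \<Longrightarrow> (H p, H q) \<in> E'"
  shows "continuous_map (quotient_top S E) (quotient_top S' E') (\<lambda>P. E' `` (H ` P))"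
proof -
  have HS: "H \<in> S \<rightarrow> S'"
    using respects E E' by (force simp: equiv_def refl_on_def)
  have "E' `` (H ` P) \<in> S' // E'" if "P \<in> S // E" for P
    using that HS quotient_map_class[where H = H, OF E E' _ respects]
    by (auto elim!: quotientE intro!: quotientI)
  moreover have "openin (quotient_top S E) {P \<in> S // E. E' `` (H ` P) \<in> U}"
    if "openin (quotient_top S' E') U" for U
  proof -
    have U: "U \<subseteq> S' // E'" "openin (top_of_set S') (\<Union>U)"
      using that openin_quotient_top[OF E'] by auto
    then have "openin (top_of_set S) (S \<inter> H -` \<Union>U)"
      using cont continuous_on_open_gen[OF HS] by blast
    then show ?thesis
      using openin_quotient_top[OF E] Union_quotient_map_preimage[OF E E' U(1) respects] by auto
  qed
  ultimately show ?thesis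
    by (auto simp: continuous_map_def topspace_quotient_top[OF E] topspace_quotient_top[OF E']
        Int_absorb1[OF openin_subset] intro!: Pi_I)
qed

lemma equiv_susp_rel: "equiv (susp_domain X b) (susp_rel X l k b)"
proof (rule equivI)
  have "sym ((susp_gen X l k b \<union> (susp_gen X l k b)\<inverse>)\<^sup>*)"
    by (rule sym_rtrancl) (auto simp: sym_def)
  then show "sym (susp_rel X l k b)"
    unfolding susp_rel_def by (auto simp: sym_def)
qed (auto simp: susp_rel_def refl_on_def trans_def)

lemma susp_rel_sym: "(p, q) \<in> susp_rel X l k b \<Longrightarrow> (q, p) \<in> susp_rel X l k b"
  using equiv_susp_rel unfolding equiv_def sym_def by blast

lemma susp_rel_trans:
  "(p, q) \<in> susp_rel X l k b \<Longrightarrow> (q, w) \<in> susp_rel X l k b \<Longrightarrow> (p, w) \<in> susp_rel X l k b"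
  using equiv_susp_rel unfolding equiv_def trans_def by blast

lemma susp_rel_refl: "p \<in> susp_domain X b \<Longrightarrow> (p, p) \<in> susp_rel X l k b"
  unfolding susp_rel_def by blast

lemma susp_gen_in_susp_rel:
  assumes "x \<in> X" "l x \<le> r" "b x \<le> r" "(shift x, r - (l x - k x)) \<in> susp_domain X b"
  shows "((x, r), (shift x, r - (l x - k x))) \<in> susp_rel X l k b"
proof -
  have "((x, r), (shift x, r - (l x - k x))) \<in> susp_gen X l k b"
    unfolding susp_gen_def susp_domain_def using assms(1-3) by blast
  then show ?thesis
    using assms unfolding susp_rel_def susp_domain_def by blast
qed

lemma topspace_suspension: "topspace (suspension X l k b) = susp_domain X b // susp_rel X l k b"
  unfolding suspension_def by (rule topspace_quotient_top[OF equiv_susp_rel])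

lemma susp_class_in_topspace:
  "(x, r) \<in> susp_domain X b \<Longrightarrow> susp_class X l k b x r \<in> topspace (suspension X l k b)"
  unfolding topspace_suspension susp_class_def by (rule quotientI)

lemma topspace_suspensionE:
  assumes "P \<in> topspace (suspension X l k b)"
  obtains x r where "(x, r) \<in> susp_domain X b" "P = susp_class X l k b x r"
  using assms unfolding topspace_suspension susp_class_def by (auto elim!: quotientE)

lemma susp_class_eqI:
  "((x, r), (y, s)) \<in> susp_rel X l k b \<Longrightarrow> susp_class X l k b x r = susp_class X l k b y s"
  unfolding susp_class_def using equiv_class_eq[OF equiv_susp_rel] by blast

lemma susp_class_self: "(x, r) \<in> susp_domain X b \<Longrightarrow> (x, r) \<in> susp_class X l k b x r"
  unfolding susp_class_def by (rule equiv_class_self[OF equiv_susp_rel])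

lemma susp_rel_translate:
  assumes "((x, r), (y, s)) \<in> susp_rel X l k b" "0 \<le> t"
  shows "((x, r + t), (y, s + t)) \<in> susp_rel X l k b"
proof -
  let ?G = "susp_gen X l k b \<union> (susp_gen X l k b)\<inverse>"
  have "((fst p, snd p + t), (fst q, snd q + t)) \<in> ?G\<^sup>*" if "(p, q) \<in> ?G\<^sup>*" for p q
    using that
  proof (induction rule: rtrancl_induct)
    case (step q w)
    have "((fst q, snd q + t), (fst w, snd w + t)) \<in> ?G"
      using step(2) assms(2) unfolding susp_gen_def susp_domain_def by (auto simp: algebra_simps)
    with step(3) show ?case by (rule rtrancl_into_rtrancl)
  qed simp
  then show ?thesis
    using assms unfolding susp_rel_def susp_domain_def by fastforce
qed

lemma susp_flow_class:
  assumes "(x, r) \<in> susp_domain X b" "0 \<le> t"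
  shows "susp_flow X l k b t (susp_class X l k b x r) = susp_class X l k b x (r + t)"
proof
  show "susp_class X l k b x (r + t) \<subseteq> susp_flow X l k b t (susp_class X l k b x r)"
    using susp_class_self[OF assms(1), of l k] unfolding susp_flow_def susp_class_def by force
  show "susp_flow X l k b t (susp_class X l k b x r) \<subseteq> susp_class X l k b x (r + t)"
    unfolding susp_flow_def susp_class_def
    using susp_rel_translate[OF _ assms(2)] susp_rel_trans by fastforce
qed

abbreviation std_rel :: "(nat \<Rightarrow> nat) set \<Rightarrow> (((nat \<Rightarrow> nat) \<times> real) \<times> ((nat \<Rightarrow> nat) \<times> real)) set" where
  "std_rel X \<equiv> susp_rel X (\<lambda>_. 1) (\<lambda>_. 0) (\<lambda>_. 0)"

abbreviation std_class :: "(nat \<Rightarrow> nat) set \<Rightarrow> (nat \<Rightarrow> nat) \<Rightarrow> real \<Rightarrow> ((nat \<Rightarrow> nat) \<times> real) set" where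
  "std_class X \<equiv> susp_class X (\<lambda>_. 1) (\<lambda>_. 0) (\<lambda>_. 0)"

text \<open>Every point \<open>[x, r]\<close> of the standard suspension has the unique representative
  \<open>(\<sigma>^\<lfloor>r\<rfloor> x, frac r)\<close>.\<close>
definition std_normal_form :: "(nat \<Rightarrow> nat) \<times> real \<Rightarrow> (nat \<Rightarrow> nat) \<times> real" where
  "std_normal_form p = ((shift ^^ nat \<lfloor>snd p\<rfloor>) (fst p), frac (snd p))"

lemma std_normal_form_shift:
  assumes "1 \<le> s"
  shows "std_normal_form (x, s) = std_normal_form (shift x, s - 1)"
proof -
  have "nat \<lfloor>s\<rfloor> = Suc (nat \<lfloor>s - 1\<rfloor>)" using assms by linarith
  then show ?thesis by (simp add: std_normal_form_def funpow_swap1 frac_def)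
qed

lemma std_normal_form_eq:
  assumes "(p, q) \<in> std_rel X"
  shows "std_normal_form p = std_normal_form q"
proof -
  let ?G = "susp_gen X (\<lambda>_. 1) (\<lambda>_. 0) (\<lambda>_. 0)"
  have "std_normal_form p = std_normal_form q" if "(p, q) \<in> (?G \<union> ?G\<inverse>)\<^sup>*"
    using that
  proof (induction rule: rtrancl_induct)
    case (step q w)
    then show ?case
      unfolding susp_gen_def using std_normal_form_shift by auto
  qed simp
  then show ?thesis using assms unfolding susp_rel_def by blast
qed

lemma std_class_eq_imp_shift_eq:
  assumes "y \<in> X" "std_class X y (real n) = std_class X y' (real m)"
  shows "(shift ^^ n) y = (shift ^^ m) y'"
proof -
  have "(y, real n) \<in> std_class X y' (real m)"
    using susp_class_self[of y "real n" X "\<lambda>_. 0" "\<lambda>_. 1" "\<lambda>_. 0"] assms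
    by (simp add: susp_domain_def)
  then have "std_normal_form (y', real m) = std_normal_form (y, real n)"
    unfolding susp_class_def by (blast intro: std_normal_form_eq)
  then show ?thesis unfolding std_normal_form_def by simp
qed

lemma std_rel_funpow_shift:
  assumes "y \<in> shift_space N A" "0 \<le> s"
  shows "((y, s + real n), ((shift ^^ n) y, s)) \<in> std_rel (shift_space N A)"
  using assms(1)
proof (induction n arbitrary: y)
  case 0
  then show ?case using assms(2) by (auto intro: susp_rel_refl simp: susp_domain_def)
next
  case (Suc n)
  have "((y, s + real (Suc n)), (shift y, s + real n)) \<in> std_rel (shift_space N A)"
    using susp_gen_in_susp_rel[of y "shift_space N A" "\<lambda>_. 1" "s + real (Suc n)" "\<lambda>_. 0" "\<lambda>_. 0"]
      Suc.prems assms(2) shift_space_shift by (simp add: susp_domain_def)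
  then show ?case
    using Suc.IH[OF shift_space_shift[OF Suc.prems]] susp_rel_trans by (simp add: funpow_swap1)
qed

section \<open>Flow equivalence implies continuous orbit equivalence\<close>

text \<open>On \<open>\<nat>\<close> the floor agrees with \<open>\<lambda>y. \<lfloor>y + 1/2\<rfloor>\<close>, which is continuous there.\<close>

lemma continuous_on_nat_floor:
  fixes f :: "'a::topological_space \<Rightarrow> real"
  assumes "continuous_on S f" "\<forall>x\<in>S. f x \<in> \<nat>"
  shows "continuous_on S (\<lambda>x. nat \<lfloor>f x\<rfloor>)"
proof -
  have floor: "continuous_on (UNIV - \<int>) (\<lambda>y::real. \<lfloor>y\<rfloor>)"
    using continuous_on_of_int_floor[where 'b = int] by simp
  have half: "f x + 1/2 \<notin> \<int> \<and> \<lfloor>f x + 1/2\<rfloor> = \<lfloor>f x\<rfloor>" if "x \<in> S" for x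
  proof -
    have "f x \<in> \<nat>" using assms(2) that by blast
    then obtain n where n: "f x = real n" by (rule Nats_cases)
    have "\<lfloor>real n + 1/2\<rfloor> = int n" by (simp add: floor_eq_iff)
    moreover from this have "frac (real n + 1/2) \<noteq> 0" by (simp add: frac_def)
    ultimately show ?thesis using n by (simp add: frac_eq_0_iff)
  qed
  have "continuous_on S (\<lambda>x. \<lfloor>f x + 1/2\<rfloor>)"
    by (rule continuous_on_compose2[OF floor]) (use assms(1) half in \<open>auto intro: continuous_intros\<close>)
  then have "continuous_on S (\<lambda>x. nat \<lfloor>f x + 1/2\<rfloor>)"
    by (rule continuous_on_compose2[OF Topological_Spaces.continuous_on_discrete]) auto
  then show ?thesis using half by (simp cong: continuous_on_cong)
qed

lemma flow_conjugacy_base_orbit: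
  assumes "x \<in> XA" "h x \<in> XB"
    and flow: "\<forall>t\<ge>0. \<forall>p\<in>topspace (suspension XA l k b).
          \<Phi> (susp_flow XA l k b t p) = std_flow XB t (\<Phi> p)"
    and base: "\<forall>x\<in>XA. \<Phi> (susp_class XA l k b x (b x)) = std_base XB (h x)"
  shows "\<Phi> (susp_class XA l k b x (b x + real n)) = std_class XB (h x) (real n)"
proof -
  have D: "(x, b x) \<in> susp_domain XA b" and DB: "(h x, 0) \<in> susp_domain XB (\<lambda>_. 0)"
    using assms(1,2) by (auto simp: susp_domain_def)
  have "\<Phi> (susp_class XA l k b x (b x + real n))
      = \<Phi> (susp_flow XA l k b (real n) (susp_class XA l k b x (b x)))"
    using susp_flow_class[OF D] by simp
  also have "\<dots> = std_flow XB (real n) (std_class XB (h x) 0)"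
    using flow susp_class_in_topspace[OF D] base assms(1) by simp
  also have "\<dots> = std_class XB (h x) (real n)"
    using susp_flow_class[OF DB] by simp
  finally show ?thesis .
qed

lemma flow_conjugacy_imp_orbit_cocycle:
  assumes trip: "susp_triplet XA l k b"
    and hX: "\<forall>x\<in>XA. h x \<in> XB" and shiftX: "\<forall>x\<in>XA. shift x \<in> XA"
    and flow: "\<forall>t\<ge>0. \<forall>p\<in>topspace (suspension XA l k b).
          \<Phi> (susp_flow XA l k b t p) = std_flow XB t (\<Phi> p)"
    and base: "\<forall>x\<in>XA. \<Phi> (susp_class XA l k b x (b x)) = std_base XB (h x)"
  shows "\<exists>k1 l1 :: (nat \<Rightarrow> nat) \<Rightarrow> nat. continuous_on XA k1 \<and> continuous_on XA l1 \<and>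
     (\<forall>x\<in>XA. (shift ^^ k1 x) (h (shift x)) = (shift ^^ l1 x) (h x))"
proof (intro exI conjI ballI)
  have cont: "continuous_on XA l" "continuous_on XA k" "continuous_on XA b"
    and nat_l: "\<forall>x\<in>XA. l x - b x \<in> \<nat>" and nat_k: "\<forall>x\<in>XA. k x - b (shift x) \<in> \<nat>"
    using trip unfolding susp_triplet_def by blast+
  have "continuous_on XA (\<lambda>x. b (shift x))"
    using continuous_on_compose2[OF cont(3) continuous_on_shift] shiftX by blast
  then show "continuous_on XA (\<lambda>x. nat \<lfloor>k x - b (shift x)\<rfloor>)"
    using cont nat_k by (intro continuous_on_nat_floor continuous_intros) auto
  show "continuous_on XA (\<lambda>x. nat \<lfloor>l x - b x\<rfloor>)"
    using cont nat_l by (intro continuous_on_nat_floor continuous_intros) auto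
  fix x assume x: "x \<in> XA"
  define l1 where "l1 = nat \<lfloor>l x - b x\<rfloor>"
  define k1 where "k1 = nat \<lfloor>k x - b (shift x)\<rfloor>"
  have l: "l x = b x + real l1" and k: "k x = b (shift x) + real k1"
    using x nat_l nat_k unfolding l1_def k1_def by (auto elim!: Nats_cases)
  have "((x, l x), (shift x, k x)) \<in> susp_rel XA l k b"
    using susp_gen_in_susp_rel[of x XA l "l x" b k] x shiftX l k by (simp add: susp_domain_def)
  then have "susp_class XA l k b x (b x + real l1) = susp_class XA l k b (shift x) (b (shift x) + real k1)"
    unfolding l k by (rule susp_class_eqI)
  then have "std_class XB (h x) (real l1) = std_class XB (h (shift x)) (real k1)"
    using flow_conjugacy_base_orbit[OF _ _ flow base] x shiftX hX by metis
  then show "(shift ^^ k1) (h (shift x)) = (shift ^^ l1) (h x)"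
    using std_class_eq_imp_shift_eq hX x by metis
qed

lemma flow_equiv_imp_cont_orbit_equiv:
  assumes "one_sided_flow_equiv N A M B"
  shows "cont_orbit_equiv N A M B"
proof -
  let ?XA = "shift_space N A" and ?XB = "shift_space M B"
  from assms obtain l1 k1 b1 l2 k2 b2 h h' \<Phi>1 \<Phi>2 where
    t1: "susp_triplet ?XA l1 k1 b1" and t2: "susp_triplet ?XB l2 k2 b2" and
    hom: "homeomorphism ?XA ?XB h h'" and
    f1: "\<forall>t\<ge>0. \<forall>p\<in>topspace (suspension ?XA l1 k1 b1).
          \<Phi>1 (susp_flow ?XA l1 k1 b1 t p) = std_flow ?XB t (\<Phi>1 p)" and
    f2: "\<forall>t\<ge>0. \<forall>p\<in>topspace (suspension ?XB l2 k2 b2).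
          \<Phi>2 (susp_flow ?XB l2 k2 b2 t p) = std_flow ?XA t (\<Phi>2 p)" and
    b1: "\<forall>x\<in>?XA. \<Phi>1 (susp_class ?XA l1 k1 b1 x (b1 x)) = std_base ?XB (h x)" and
    b2: "\<forall>y\<in>?XB. \<Phi>2 (susp_class ?XB l2 k2 b2 y (b2 y)) = std_base ?XA (h' y)"
    unfolding one_sided_flow_equiv_def Let_def by (elim exE conjE) (rule that; assumption)
  have "\<forall>x\<in>?XA. h x \<in> ?XB" "\<forall>y\<in>?XB. h' y \<in> ?XA"
    using hom unfolding homeomorphism_def by auto
  then obtain kA lA kB lB :: "(nat \<Rightarrow> nat) \<Rightarrow> nat" where
    "continuous_on ?XA kA" "continuous_on ?XA lA"
    "\<forall>x\<in>?XA. (shift ^^ kA x) (h (shift x)) = (shift ^^ lA x) (h x)"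
    "continuous_on ?XB kB" "continuous_on ?XB lB"
    "\<forall>y\<in>?XB. (shift ^^ kB y) (h' (shift y)) = (shift ^^ lB y) (h' y)"
    using flow_conjugacy_imp_orbit_cocycle[OF t1 _ _ f1 b1]
      flow_conjugacy_imp_orbit_cocycle[OF t2 _ _ f2 b2] shift_space_shift
    by (metis (no_types, lifting))
  with hom show ?thesis
    unfolding cont_orbit_equiv_def Let_def by blast
qed

section \<open>Growth of admissible shift spaces\<close>

lemma mat_pow_pos_imp_walk:
  assumes "zero_one_matrix N A" "0 < mat_pow N A n i j" "i \<in> {1..N}" "j \<in> {1..N}"
  shows "\<exists>f. f 0 = i \<and> f n = j \<and> (\<forall>t\<le>n. f t \<in> {1..N}) \<and> (\<forall>t<n. A (f t) (f (Suc t)) = 1)"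
  using assms(2,4)
proof (induction n arbitrary: j)
  case 0
  then have "i = j" by (simp split: if_splits)
  then show ?case using assms(3) by (intro exI[of _ "\<lambda>_. i"]) auto
next
  case (Suc n)
  have "(\<Sum>m\<in>{1..N}. mat_pow N A n i m * A m j) \<noteq> 0"
    using Suc.prems(1) unfolding mat_pow.simps by linarith
  then obtain m where m: "m \<in> {1..N}" "mat_pow N A n i m * A m j \<noteq> 0"
    by (meson sum.neutral)
  moreover have "A m j \<in> {0, 1}"
    using assms(1) m(1) Suc.prems(2) unfolding zero_one_matrix_def by blast
  ultimately have Amj: "A m j = 1" by auto
  obtain f where f: "f 0 = i" "f n = m" "\<forall>t\<le>n. f t \<in> {1..N}" "\<forall>t<n. A (f t) (f (Suc t)) = 1"
    using Suc.IH[of m] m by auto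
  define g where "g = f(Suc n := j)"
  have "\<forall>t\<le>Suc n. g t \<in> {1..N}"
    using f(3) Suc.prems(2) by (auto simp: g_def le_Suc_eq)
  moreover have "\<forall>t<Suc n. A (g t) (g (Suc t)) = 1"
    using f(2,4) Amj by (auto simp: g_def less_Suc_eq)
  ultimately show ?case using f(1) by (intro exI[of _ g]) (simp add: g_def)
qed

locale admissible_shift =
  fixes N :: nat and A :: "nat \<Rightarrow> nat \<Rightarrow> nat"
  assumes admissible: "admissible_matrix N A"
begin

abbreviation X :: "(nat \<Rightarrow> nat) set" where
  "X \<equiv> shift_space N A"

lemma zero_one: "zero_one_matrix N A"
  and irreducible: "irreducible_matrix N A"
  and not_permutation: "\<not> permutation_matrix N A"
  using admissible unfolding admissible_matrix_def by auto

lemma walk_exists: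
  assumes "i \<in> {1..N}" "j \<in> {1..N}"
  shows "\<exists>q f. 0 < q \<and> f 0 = i \<and> f q = j \<and> (\<forall>t\<le>q. f t \<in> {1..N}) \<and>
    (\<forall>t<q. A (f t) (f (Suc t)) = 1)"
  using irreducible mat_pow_pos_imp_walk[OF zero_one _ assms] assms
  unfolding irreducible_matrix_def by blast

lemma successor_exists:
  assumes "i \<in> {1..N}"
  shows "\<exists>j\<in>{1..N}. A i j = 1"
proof -
  obtain q f where f: "0 < q" "f 0 = i" "\<forall>t\<le>q. f t \<in> {1..N}" "\<forall>t<q. A (f t) (f (Suc t)) = 1"
    using walk_exists[OF assms assms] by blast
  then show ?thesis by (intro bexI[of _ "f 1"]) auto
qed

lemma predecessor_exists:
  assumes "j \<in> {1..N}"
  shows "\<exists>i\<in>{1..N}. A i j = 1"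
proof -
  obtain q f where f: "0 < q" "f q = j" "\<forall>t\<le>q. f t \<in> {1..N}" "\<forall>t<q. A (f t) (f (Suc t)) = 1"
    using walk_exists[OF assms assms] by blast
  moreover have "Suc (q - 1) = q" using f(1) by simp
  ultimately have "A (f (q - 1)) j = 1" "f (q - 1) \<in> {1..N}"
    using f(4)[rule_format, of "q - 1"] by simp_all
  then show ?thesis by blast
qed

definition succ :: "nat \<Rightarrow> nat" where
  "succ i = (SOME j. j \<in> {1..N} \<and> A i j = 1)"

lemma succ: "i \<in> {1..N} \<Longrightarrow> succ i \<in> {1..N} \<and> A i (succ i) = 1"
  unfolding succ_def by (rule someI_ex) (use successor_exists in blast)

text \<open>The finitely many points \<open>tail s\<close> serve as canonical continuations: a point whose
  \<open>t\<close>-th shift is a tail is determined by its first \<open>t + 1\<close> symbols, so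
  \<open>tailed_count v t\<close> is the number of admissible words of length \<open>t + 1\<close> starting at \<open>v\<close>.\<close>

definition tail :: "nat \<Rightarrow> nat \<Rightarrow> nat" where
  "tail s = (\<lambda>n. (succ ^^ n) s)"

definition tails :: "(nat \<Rightarrow> nat) set" where
  "tails = tail ` {1..N}"

definition tailed :: "nat \<Rightarrow> nat \<Rightarrow> (nat \<Rightarrow> nat) set" where
  "tailed v t = {z \<in> X. z 0 = v \<and> (shift ^^ t) z \<in> tails}"

definition tailed_count :: "nat \<Rightarrow> nat \<Rightarrow> nat" where
  "tailed_count v t = card (tailed v t)"

lemma tail_0 [simp]: "tail s 0 = s"
  by (simp add: tail_def)

lemma tail_symbol: "s \<in> {1..N} \<Longrightarrow> tail s n \<in> {1..N}"
proof (induction n)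
  case (Suc n)
  then show ?case using succ[of "tail s n"] by (simp add: tail_def)
qed (simp add: tail_def)

lemma tail_in_shift_space: "s \<in> {1..N} \<Longrightarrow> tail s \<in> X"
  using tail_symbol succ[OF tail_symbol] unfolding shift_space_def by (simp add: tail_def)

lemma funpow_shift_tail: "(shift ^^ t) (tail s) = tail (tail s t)"
  by (simp add: tail_def funpow_shift funpow_add)

lemma funpow_shift_tail_in_tails: "s \<in> {1..N} \<Longrightarrow> (shift ^^ t) (tail s) \<in> tails"
  unfolding funpow_shift_tail tails_def using tail_symbol by blast

lemma tails_eq: "y \<in> tails \<Longrightarrow> y = tail (y 0)"
  unfolding tails_def by auto

lemma eventually_tail_eqI:
  assumes "(shift ^^ t) z \<in> tails" "(shift ^^ t) z' \<in> tails" "agree (Suc t) z z'"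
  shows "z = z'"
proof -
  have "(shift ^^ t) z = tail (z t)" "(shift ^^ t) z' = tail (z' t)"
    using tails_eq[OF assms(1)] tails_eq[OF assms(2)] by (simp_all add: funpow_shift_apply)
  then have "glue t z ((shift ^^ t) z) = glue t z' ((shift ^^ t) z')"
    using assms(3) glue_cong by (simp add: agree_Suc_iff)
  then show ?thesis by simp
qed

lemma finite_eventually_tails: "finite {z \<in> X. (shift ^^ t) z \<in> tails}"
proof -
  let ?S = "{z \<in> X. (shift ^^ t) z \<in> tails}"
  have "inj_on (\<lambda>z. restrict z {..t}) ?S"
  proof (rule inj_onI)
    fix z z' assume zz: "z \<in> ?S" "z' \<in> ?S" and eq: "restrict z {..t} = restrict z' {..t}"
    have "z i = z' i" if "i < Suc t" for i
      using fun_cong[OF eq, of i] that by simp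
    then have "agree (Suc t) z z'" by (simp add: agree_def)
    then show "z = z'" using zz eventually_tail_eqI by blast
  qed
  moreover have "(\<lambda>z. restrict z {..t}) ` ?S \<subseteq> (\<Pi>\<^sub>E i\<in>{..t}. {1..N})"
  proof
    fix w assume "w \<in> (\<lambda>z. restrict z {..t}) ` ?S"
    then obtain z where "z \<in> X" "w = restrict z {..t}" by blast
    then show "w \<in> (\<Pi>\<^sub>E i\<in>{..t}. {1..N})" using shift_space_symbol[of z N A] by auto
  qed
  then have "finite ((\<lambda>z. restrict z {..t}) ` ?S)"
    by (rule finite_subset) (simp add: finite_PiE)
  ultimately show ?thesis using finite_imageD by blast
qed

lemma finite_tailed: "finite (tailed v t)"
  by (rule finite_subset[OF _ finite_eventually_tails]) (auto simp: tailed_def)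

lemma tail_in_tailed: "v \<in> {1..N} \<Longrightarrow> tail v \<in> tailed v t"
  unfolding tailed_def using tail_in_shift_space funpow_shift_tail_in_tails by simp

lemma tailed_count_pos: "v \<in> {1..N} \<Longrightarrow> 1 \<le> tailed_count v t"
  using tail_in_tailed[of v t] finite_tailed[of v t]
  unfolding tailed_count_def by (auto simp: Suc_le_eq card_gt_0_iff)

text \<open>Words from \<open>v\<close> of length \<open>s + 1\<close> followed by words of length \<open>e + 1\<close> from their last
  symbol are words from \<open>v\<close> of length \<open>s + e + 1\<close>.\<close>

lemma tailed_count_concat: "(\<Sum>z\<in>tailed v s. tailed_count (z s) e) \<le> tailed_count v (s + e)"
proof -
  let ?S = "SIGMA z:tailed v s. tailed (z s) e"
  have "inj_on (\<lambda>(z, u). glue s z u) ?S"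
  proof (rule inj_onI, clarsimp)
    fix z u z' u'
    assume z: "z \<in> tailed v s" "u \<in> tailed (z s) e" "z' \<in> tailed v s" "u' \<in> tailed (z' s) e"
      and eq: "glue s z u = glue s z' u'"
    have "u = u'" using arg_cong[OF eq, of "shift ^^ s"] by simp
    have "agree s (glue s z u) z'" using agree_glue[of s z' u'] eq by simp
    then have "agree s z z'" by (rule agree_trans[OF agree_sym[OF agree_glue]])
    with z \<open>u = u'\<close> have "agree (Suc s) z z'"
      by (simp add: agree_Suc_iff tailed_def)
    then show "z = z' \<and> u = u'"
      using z eventually_tail_eqI \<open>u = u'\<close> unfolding tailed_def by blast
  qed
  moreover have "(\<lambda>(z, u). glue s z u) ` ?S \<subseteq> tailed v (s + e)"
  proof clarify
    fix z u assume z: "z \<in> tailed v s" and u: "u \<in> tailed (z s) e"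
    have "glue s z u \<in> X"
      using z u by (intro glue_in_shift_space_point) (auto simp: tailed_def)
    moreover have "glue s z u 0 = v"
      using z u by (cases s) (auto simp: tailed_def glue_def)
    moreover have "(shift ^^ (s + e)) (glue s z u) \<in> tails"
      using u by (simp add: tailed_def funpow_add add.commute[of s])
    ultimately show "glue s z u \<in> tailed v (s + e)" unfolding tailed_def by simp
  qed
  ultimately have "card ?S \<le> tailed_count v (s + e)"
    unfolding tailed_count_def by (intro card_inj_on_le finite_tailed)
  then show ?thesis
    using finite_tailed by (simp add: tailed_count_def)
qed

lemma tailed_count_scale:
  assumes "\<forall>c\<in>{1..N}. m \<le> tailed_count c e"
  shows "m * tailed_count v s \<le> tailed_count v (s + e)"
proof -
  have "m \<le> tailed_count (z s) e" if "z \<in> tailed v s" for z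
    using assms shift_space_symbol that by (auto simp: tailed_def)
  then have "tailed_count v s * m \<le> (\<Sum>z\<in>tailed v s. tailed_count (z s) e)"
    using sum_bounded_below[of "tailed v s" m "\<lambda>z. tailed_count (z s) e"]
    unfolding tailed_count_def by simp
  then show ?thesis
    using tailed_count_concat[where v = v and s = s and e = e] by (simp add: mult.commute)
qed

lemma tailed_count_mono: "t \<le> t' \<Longrightarrow> tailed_count v t \<le> tailed_count v t'"
  using tailed_count_scale[of 1 "t' - t" v t] tailed_count_pos by simp

lemma connecting_point:
  assumes "i \<in> {1..N}" "j \<in> {1..N}"
  shows "\<exists>q. \<exists>z\<in>X. z 0 = i \<and> z q = j"
proof -
  obtain q f where f: "f 0 = i" "f q = j" "\<forall>t\<le>q. f t \<in> {1..N}" "\<forall>t<q. A (f t) (f (Suc t)) = 1"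
    using walk_exists[OF assms] by blast
  have "glue q f (tail j) \<in> X"
  proof (rule glue_in_shift_space)
    show "A (f (q - 1)) (tail j 0) = 1" if "0 < q"
    proof -
      have "Suc (q - 1) = q" using that by simp
      then show ?thesis using f(2) f(4)[rule_format, of "q - 1"] that by simp
    qed
  qed (use f assms(2) tail_in_shift_space in auto)
  moreover have "glue q f (tail j) 0 = i \<and> glue q f (tail j) q = j"
    using f by (cases q) (auto simp: glue_def)
  ultimately show ?thesis by blast
qed

lemma tailed_count_connect:
  assumes "z \<in> X" "z 0 = b" "z q = v"
  shows "tailed_count v s \<le> tailed_count b (q + s)"
proof -
  have v: "v \<in> {1..N}" using shift_space_symbol[OF assms(1), of q] assms(3) by simp
  define z' where "z' = glue q z (tail v)"
  have "z' \<in> X" unfolding z'_def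
    using assms v tail_in_shift_space by (intro glue_in_shift_space_point) auto
  moreover have "z' 0 = b" using assms by (cases q) (auto simp: z'_def glue_def)
  moreover have "(shift ^^ q) z' \<in> tails"
    using funpow_shift_tail_in_tails[OF v, of 0] by (simp add: z'_def)
  ultimately have "z' \<in> tailed b q" unfolding tailed_def by simp
  moreover have "z' q = v" by (simp add: z'_def glue_def)
  ultimately have "tailed_count v s \<le> (\<Sum>z\<in>tailed b q. tailed_count (z q) s)"
    using member_le_sum[of z' "tailed b q" "\<lambda>z. tailed_count (z q) s"] finite_tailed by simp
  then show ?thesis using tailed_count_concat le_trans by blast
qed

lemma branching_vertex:
  "\<exists>g\<in>{1..N}. \<exists>g1\<in>{1..N}. \<exists>g2\<in>{1..N}. g1 \<noteq> g2 \<and> A g g1 = 1 \<and> A g g2 = 1"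
proof (rule ccontr)
  assume no_branch: "\<not> ?thesis"
  let ?I = "{1..N}"
  have row: "card {j\<in>?I. A i j = 1} = 1" if i: "i \<in> ?I" for i
  proof -
    obtain j where j: "j \<in> ?I" "A i j = 1" using successor_exists[OF i] by blast
    then have "{j'\<in>?I. A i j' = 1} = {j}" using no_branch i by blast
    then show ?thesis by simp
  qed
  have col: "1 \<le> card {i\<in>?I. A i j = 1}" if "j \<in> ?I" for j
  proof -
    have "{i\<in>?I. A i j = 1} \<noteq> {}" using predecessor_exists[OF that] by blast
    then have "0 < card {i\<in>?I. A i j = 1}" by (simp add: card_gt_0_iff)
    then show ?thesis by simp
  qed
  have count: "card {j\<in>?I. P j} = (\<Sum>j\<in>?I. of_bool (P j))" for P :: "nat \<Rightarrow> bool"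
    by (simp add: Int_def)
  have "(\<Sum>j\<in>?I. card {i\<in>?I. A i j = 1}) = (\<Sum>i\<in>?I. card {j\<in>?I. A i j = 1})"
    unfolding count by (rule sum.swap)
  also have "\<dots> = (\<Sum>j\<in>?I. 1)" using row by simp
  finally have sums: "(\<Sum>j\<in>?I. 1) = (\<Sum>j\<in>?I. card {i\<in>?I. A i j = 1})" ..
  have "card {i\<in>?I. A i j = 1} = 1" if "j \<in> ?I" for j
    using sum_mono_inv[OF sums col that] by simp
  then have "permutation_matrix N A"
    using zero_one row unfolding permutation_matrix_def by blast
  then show False using not_permutation by simp
qed

lemma tailed_count_branching:
  assumes g: "g \<in> {1..N}" "g1 \<in> {1..N}" "g2 \<in> {1..N}" "g1 \<noteq> g2" "A g g1 = 1" "A g g2 = 1"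
  shows "2 \<le> tailed_count g 1"
proof -
  define w where "w k = glue 1 (\<lambda>_. g) (tail k)" for k
  have "w k \<in> tailed g 1" if "k \<in> {1..N}" "A g k = 1" for k
  proof -
    have "w k \<in> X"
      unfolding w_def using that g(1) tail_in_shift_space by (intro glue_in_shift_space) auto
    moreover have "(shift ^^ 1) (w k) \<in> tails"
      using funpow_shift_tail_in_tails[OF that(1), of 0] by (simp only: w_def funpow_shift_glue funpow_0)
    ultimately show ?thesis unfolding tailed_def by (simp add: w_def glue_def)
  qed
  then have "card {w g1, w g2} \<le> tailed_count g 1"
    using g unfolding tailed_count_def by (intro card_mono finite_tailed) simp
  moreover have "w g1 \<noteq> w g2"
  proof
    assume "w g1 = w g2"
    then have "w g1 1 = w g2 1" by simp
    then show False using g(4) by (simp add: w_def glue_def)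
  qed
  ultimately show ?thesis by simp
qed

lemma tailed_count_ge_two: "\<exists>e. \<forall>c\<in>{1..N}. 2 \<le> tailed_count c e"
proof -
  obtain g g1 g2 where g: "g \<in> {1..N}" "g1 \<in> {1..N}" "g2 \<in> {1..N}" "g1 \<noteq> g2"
    "A g g1 = 1" "A g g2 = 1"
    using branching_vertex by blast
  have two: "2 \<le> tailed_count g 1" using tailed_count_branching[OF g] .
  have "\<forall>c\<in>{1..N}. \<exists>q. \<exists>z\<in>X. z 0 = c \<and> z q = g"
    using connecting_point g(1) by blast
  then obtain q where q: "\<forall>c\<in>{1..N}. \<exists>z\<in>X. z 0 = c \<and> z (q c) = g"
    by (rule bchoice[elim_format]) blast
  define e where "e = Suc (Max (q ` {1..N}))"
  have "2 \<le> tailed_count c e" if c: "c \<in> {1..N}" for c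
  proof -
    have "q c < e" using c unfolding e_def by (simp add: le_imp_less_Suc)
    then have "tailed_count g 1 \<le> tailed_count g (e - q c)"
      by (intro tailed_count_mono) simp
    also have "\<dots> \<le> tailed_count c (q c + (e - q c))"
    proof -
      obtain z where "z \<in> X" "z 0 = c" "z (q c) = g" using q c by blast
      then show ?thesis by (rule tailed_count_connect)
    qed
    finally show ?thesis using two \<open>q c < e\<close> by simp
  qed
  then show ?thesis by blast
qed

lemma tailed_count_growth:
  "\<exists>G. \<forall>b\<in>{1..N}. \<forall>v\<in>{1..N}. \<forall>t D. G \<le> D \<longrightarrow> tailed_count v t < tailed_count b (t + D)"
proof -
  obtain e where e: "\<forall>c\<in>{1..N}. 2 \<le> tailed_count c e"
    using tailed_count_ge_two by blast
  have "\<forall>bv\<in>{1..N} \<times> {1..N}. \<exists>q. \<exists>z\<in>X. z 0 = fst bv \<and> z q = snd bv"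
    using connecting_point by auto
  then obtain q where q: "\<forall>bv\<in>{1..N} \<times> {1..N}. \<exists>z\<in>X. z 0 = fst bv \<and> z (q bv) = snd bv"
    by (rule bchoice[elim_format]) blast
  define G where "G = Max (q ` ({1..N} \<times> {1..N})) + e"
  have "tailed_count v t < tailed_count b (t + D)"
    if bv: "b \<in> {1..N}" "v \<in> {1..N}" and D: "G \<le> D" for b v t D
  proof -
    have "tailed_count v t < 2 * tailed_count v t"
      using tailed_count_pos[OF bv(2), of t] by linarith
    also have "\<dots> \<le> tailed_count v (t + e)" by (rule tailed_count_scale[OF e])
    also have "\<dots> \<le> tailed_count b (q (b, v) + (t + e))"
    proof -
      obtain z where "z \<in> X" "z 0 = b" "z (q (b, v)) = v" using q[rule_format, of "(b, v)"] bv by auto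
      then show ?thesis by (rule tailed_count_connect)
    qed
    also have "\<dots> \<le> tailed_count b (t + D)"
    proof (rule tailed_count_mono)
      have "q (b, v) \<le> Max (q ` ({1..N} \<times> {1..N}))" using bv by simp
      then show "q (b, v) + (t + e) \<le> t + D" using D unfolding G_def by simp
    qed
    finally show ?thesis .
  qed
  then show ?thesis by blast
qed

lemma card_cylinder_tailed:
  assumes y: "y \<in> X"
  shows "card {z \<in> X. agree (Suc m) z y \<and> (shift ^^ (m + t)) z \<in> tails} = tailed_count (y m) t"
proof -
  have "card {z \<in> X. agree (Suc m) z y \<and> (shift ^^ (m + t)) z \<in> tails}
      = card {w \<in> X. agree 1 w ((shift ^^ m) y) \<and> (shift ^^ t) w \<in> tails}"
    using card_cylinder_funpow_shift[OF y, of 1 m "\<lambda>w. (shift ^^ t) w \<in> tails"]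
    by (simp add: funpow_add add.commute[of m])
  also have "{w \<in> X. agree 1 w ((shift ^^ m) y) \<and> (shift ^^ t) w \<in> tails} = tailed (y m) t"
    by (auto simp: tailed_def agree_def funpow_shift_apply)
  finally show ?thesis unfolding tailed_count_def .
qed

end

section \<open>Birkhoff sums and order units\<close>

definition birkhoff_sum :: "((nat \<Rightarrow> nat) \<Rightarrow> 'a::comm_monoid_add) \<Rightarrow> nat \<Rightarrow> (nat \<Rightarrow> nat) \<Rightarrow> 'a" where
  "birkhoff_sum f n x = (\<Sum>i<n. f ((shift ^^ i) x))"

lemma birkhoff_sum_Suc: "birkhoff_sum f (Suc n) x = birkhoff_sum f n x + f ((shift ^^ n) x)"
  by (simp add: birkhoff_sum_def)

lemma birkhoff_sum_Suc_shift: "birkhoff_sum f (Suc n) x = f x + birkhoff_sum f n (shift x)"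
  unfolding birkhoff_sum_def sum.lessThan_Suc_shift by (simp add: funpow_swap1)

lemma funpow_shift_commute: "(shift ^^ a) ((shift ^^ b) x) = (shift ^^ b) ((shift ^^ a) x)"
  by (simp add: funpow_shift add_ac)

lemma orbit_cocycle_funpow:
  assumes rel: "\<forall>x\<in>shift_space N A. (shift ^^ k x) (h (shift x)) = (shift ^^ l x) (h x)"
    and x: "x \<in> shift_space N A"
  shows "(shift ^^ birkhoff_sum k n x) (h ((shift ^^ n) x)) = (shift ^^ birkhoff_sum l n x) (h x)"
proof (induction n)
  case (Suc n)
  define y where "y = (shift ^^ n) x"
  have y: "y \<in> shift_space N A" unfolding y_def using shift_space_funpow[OF x] .
  have "(shift ^^ birkhoff_sum k (Suc n) x) (h ((shift ^^ Suc n) x))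
      = (shift ^^ birkhoff_sum k n x) ((shift ^^ k y) (h (shift y)))"
    by (simp add: birkhoff_sum_Suc y_def funpow_add)
  also have "\<dots> = (shift ^^ l y) ((shift ^^ birkhoff_sum k n x) (h y))"
    using rel y by (simp add: funpow_shift_commute)
  also have "\<dots> = (shift ^^ birkhoff_sum l (Suc n) x) (h x)"
    using Suc.IH by (simp add: birkhoff_sum_Suc y_def funpow_add funpow_shift_commute)
  finally show ?case .
qed (simp add: birkhoff_sum_def)

lemma birkhoff_sum_cylinder_eq:
  assumes "\<forall>x\<in>shift_space N A. \<forall>z\<in>shift_space N A. agree R z x \<longrightarrow> f z = f x"
    and "x \<in> shift_space N A" "z \<in> shift_space N A" "agree (n + R) z x"
  shows "birkhoff_sum f n z = birkhoff_sum f n x"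
  unfolding birkhoff_sum_def
proof (rule sum.cong)
  fix i assume "i \<in> {..<n}"
  then show "f ((shift ^^ i) z) = f ((shift ^^ i) x)"
    using assms agree_funpow_shift[OF assms(4), of i] shift_space_funpow by simp
qed simp

text \<open>On the \<open>(n + R)\<close>-cylinder around \<open>x\<close> the Birkhoff sums of \<open>k\<close> and \<open>l\<close> are constant,
  so the iterated cocycle relation makes \<open>\<sigma>\<^sup>n\<close> a bijection onto the \<open>R\<close>-cylinder around
  \<open>\<sigma>\<^sup>n x\<close>.\<close>

lemma orbit_cocycle_card_cylinder:
  assumes rel: "\<forall>x\<in>shift_space N A. (shift ^^ k x) (h (shift x)) = (shift ^^ l x) (h x)"
    and R: "0 < R" "\<forall>x\<in>shift_space N A. \<forall>z\<in>shift_space N A. agree R z x \<longrightarrow> k z = k x \<and> l z = l x"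
    and x: "x \<in> shift_space N A"
  shows "card {u \<in> shift_space N A. agree (n + R) u x \<and> (shift ^^ (c + birkhoff_sum l n x)) (h u) \<in> T}
       = card {w \<in> shift_space N A. agree R w ((shift ^^ n) x) \<and> (shift ^^ (c + birkhoff_sum k n x)) (h w) \<in> T}"
proof -
  have "(shift ^^ (c + birkhoff_sum l n x)) (h u) = (shift ^^ (c + birkhoff_sum k n x)) (h ((shift ^^ n) u))"
    if u: "u \<in> shift_space N A" "agree (n + R) u x" for u
  proof -
    have "birkhoff_sum k n u = birkhoff_sum k n x" "birkhoff_sum l n u = birkhoff_sum l n x"
      using R(2) x u by (auto intro!: birkhoff_sum_cylinder_eq)
    then show ?thesis using orbit_cocycle_funpow[OF rel u(1), of n] by (simp add: funpow_add)
  qed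
  then have "{u \<in> shift_space N A. agree (n + R) u x \<and> (shift ^^ (c + birkhoff_sum l n x)) (h u) \<in> T}
      = {u \<in> shift_space N A. agree (n + R) u x \<and> (shift ^^ (c + birkhoff_sum k n x)) (h ((shift ^^ n) u)) \<in> T}"
    by auto
  then show ?thesis using card_cylinder_funpow_shift[OF x R(1)] by simp
qed

context admissible_shift
begin

lemma finite_eventually_tails_preimage:
  assumes "inj_on f S" "f ` S \<subseteq> X"
  shows "finite {u \<in> S. (shift ^^ t) (f u) \<in> tails}"
proof (rule finite_imageD)
  show "finite (f ` {u \<in> S. (shift ^^ t) (f u) \<in> tails})"
    using assms(2) by (auto intro: finite_subset[OF _ finite_eventually_tails])
qed (use assms(1) in \<open>auto intro: inj_on_subset\<close>)

text \<open>If \<open>l\<^sup>n x \<le> k\<^sup>n x\<close>, the counting identity above, transported by \<open>h\<close> and \<open>h\<inverse>\<close>,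
  would give no more admissible words of length \<open>G + K + 1\<close> than of length \<open>L + 1\<close>,
  although \<open>L \<le> K\<close>; this contradicts the growth of \<open>tailed_count\<close>.\<close>

lemma orbit_cocycle_birkhoff_sum_less_at:
  fixes k l :: "(nat \<Rightarrow> nat) \<Rightarrow> nat"
  assumes hom: "homeomorphism (shift_space M B) X h h'"
    and rel: "\<forall>x\<in>shift_space M B. (shift ^^ k x) (h (shift x)) = (shift ^^ l x) (h x)"
    and R: "0 < R" "\<forall>x\<in>shift_space M B. \<forall>z\<in>shift_space M B. agree R z x \<longrightarrow> k z = k x \<and> l z = l x"
    and r: "0 < r" "\<forall>y\<in>X. \<forall>z\<in>X. agree r z y \<longrightarrow> agree R (h' z) (h' y)"
    and G: "\<forall>b\<in>{1..N}. \<forall>v\<in>{1..N}. \<forall>t D. G \<le> D \<longrightarrow> tailed_count v t < tailed_count b (t + D)"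
    and n: "\<forall>x\<in>shift_space M B. \<forall>u\<in>shift_space M B. agree (n + R) u x \<longrightarrow> agree (r + G) (h u) (h x)"
    and x: "x \<in> shift_space M B"
  shows "birkhoff_sum k n x < birkhoff_sum l n x"
proof (rule ccontr)
  let ?Y = "shift_space M B"
  have h: "h ` ?Y \<subseteq> X" "h' ` X \<subseteq> ?Y" "\<forall>x\<in>?Y. h' (h x) = x" "\<forall>y\<in>X. h (h' y) = y"
    using hom unfolding homeomorphism_def by auto
  have inj: "inj_on h ?Y" "inj_on h' X"
    using h(3,4) by (auto intro: inj_on_inverseI)
  define K L where "K = birkhoff_sum k n x" and "L = birkhoff_sum l n x"
  assume "\<not> birkhoff_sum k n x < birkhoff_sum l n x"
  then have "L \<le> K" unfolding K_def L_def by simp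
  define y where "y = (shift ^^ n) x"
  have y: "y \<in> ?Y" unfolding y_def using shift_space_funpow[OF x] .
  have hx: "h x \<in> X" and hy: "h y \<in> X" using h(1) x y by auto
  let ?C = "\<lambda>z m t. card {w \<in> X. agree m w z \<and> (shift ^^ t) w \<in> tails}"
  let ?D = "\<lambda>z m t. card {w \<in> ?Y. agree m w z \<and> (shift ^^ t) (h w) \<in> tails}"
  have "?C (h x) (r + G) ((r + G) + L) = tailed_count (h x (r + G - 1)) (L + 1)"
    using card_cylinder_tailed[OF hx, of "r + G - 1" "L + 1"] r(1) by simp
  also have "\<dots> < tailed_count (h y (r - 1)) ((L + 1) + (G + (K - L)))"
    using G shift_space_symbol[OF hx, of "r + G - 1"] shift_space_symbol[OF hy, of "r - 1"]
    by (meson le_add1)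
  also have "\<dots> = ?C (h y) r ((r + G) + K)"
    using card_cylinder_tailed[OF hy, of "r - 1" "G + K + 1"] r(1) \<open>L \<le> K\<close>
    by (simp add: algebra_simps)
  also have "\<dots> = card {w \<in> X. agree r w (h y) \<and> (shift ^^ ((r + G) + K)) (h (h' w)) \<in> tails}"
    by (rule arg_cong[where f = card]) (use h(4) in auto)
  also have "\<dots> \<le> ?D (h' (h y)) R ((r + G) + K)"
  proof (rule card_cylinder_image_le[OF inj(2) h(2)])
    show "finite {w \<in> ?Y. agree R w (h' (h y)) \<and> (shift ^^ (r + G + K)) (h w) \<in> tails}"
      using finite_eventually_tails_preimage[OF inj(1) h(1)] by (rule finite_subset[rotated]) auto
  qed (use r(2) hy in auto)
  also have "\<dots> = ?D x (n + R) ((r + G) + L)"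
    using orbit_cocycle_card_cylinder[OF rel R x, where n = n and c = "r + G" and T = tails] h(3) y
    unfolding K_def L_def y_def by simp
  also have "\<dots> \<le> ?C (h x) (r + G) ((r + G) + L)"
  proof (rule card_cylinder_image_le[OF inj(1) h(1)])
    show "finite {w \<in> X. agree (r + G) w (h x) \<and> (shift ^^ (r + G + L)) w \<in> tails}"
      using finite_eventually_tails by (rule finite_subset[rotated]) auto
  qed (use n x in auto)
  finally show False by simp
qed

lemma orbit_cocycle_birkhoff_sum_less:
  fixes k l :: "(nat \<Rightarrow> nat) \<Rightarrow> nat"
  assumes hom: "homeomorphism (shift_space M B) X h h'"
    and cont: "continuous_on (shift_space M B) k" "continuous_on (shift_space M B) l"
    and rel: "\<forall>x\<in>shift_space M B. (shift ^^ k x) (h (shift x)) = (shift ^^ l x) (h x)"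
  shows "\<exists>n>0. \<forall>x\<in>shift_space M B. birkhoff_sum k n x < birkhoff_sum l n x"
proof -
  let ?Y = "shift_space M B"
  have cont_h: "continuous_on ?Y h" "continuous_on X h'"
    using hom unfolding homeomorphism_def by auto
  obtain Rk Rl where Rk: "\<forall>x\<in>?Y. \<forall>z\<in>?Y. agree Rk z x \<longrightarrow> k z = k x"
    and Rl: "\<forall>x\<in>?Y. \<forall>z\<in>?Y. agree Rl z x \<longrightarrow> l z = l x"
    using shift_space_locally_constant[OF cont(1)] shift_space_locally_constant[OF cont(2)] by blast
  define R where "R = max (max Rk Rl) 1"
  have "Rk \<le> R" "Rl \<le> R" "0 < R" unfolding R_def by auto
  then have R: "0 < R" "\<forall>x\<in>?Y. \<forall>z\<in>?Y. agree R z x \<longrightarrow> k z = k x \<and> l z = l x"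
    using cylinder_condition_mono[OF Rk] cylinder_condition_mono[OF Rl] by blast+
  obtain r0 where r0: "\<forall>y\<in>X. \<forall>z\<in>X. agree r0 z y \<longrightarrow> agree R (h' z) (h' y)"
    using shift_space_uniformly_continuous[OF cont_h(2)] by blast
  define r where "r = max r0 1"
  have r: "0 < r" "\<forall>y\<in>X. \<forall>z\<in>X. agree r z y \<longrightarrow> agree R (h' z) (h' y)"
    using cylinder_condition_mono[OF r0, of r] unfolding r_def by simp_all
  obtain G where G: "\<forall>b\<in>{1..N}. \<forall>v\<in>{1..N}. \<forall>t D. G \<le> D \<longrightarrow> tailed_count v t < tailed_count b (t + D)"
    using tailed_count_growth by blast
  obtain n0 where n0: "\<forall>x\<in>?Y. \<forall>u\<in>?Y. agree n0 u x \<longrightarrow> agree (r + G) (h u) (h x)"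
    using shift_space_uniformly_continuous[OF cont_h(1)] by blast
  define n where "n = max n0 1"
  have n: "0 < n" "\<forall>x\<in>?Y. \<forall>u\<in>?Y. agree (n + R) u x \<longrightarrow> agree (r + G) (h u) (h x)"
    using cylinder_condition_mono[OF n0, of "n + R"] unfolding n_def by simp_all
  show ?thesis
    using orbit_cocycle_birkhoff_sum_less_at[OF hom rel R r G n(2)] n(1) by blast
qed

end

lemma continuous_on_Min_image_lessThan:
  fixes f :: "nat \<Rightarrow> 'a::topological_space \<Rightarrow> 'b::linorder_topology"
  assumes "\<And>j. continuous_on S (f j)"
  shows "continuous_on S (\<lambda>x. Min ((\<lambda>j. f j x) ` {..<Suc n}))"
proof (induction n)
  case 0
  have "{..<Suc 0} = {0::nat}" by auto
  then show ?case using assms[of 0] by simp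
next
  case (Suc n)
  have "Min ((\<lambda>j. f j x) ` {..<Suc (Suc n)}) = min (f (Suc n) x) (Min ((\<lambda>j. f j x) ` {..<Suc n}))" for x
    by (simp add: lessThan_Suc Min_insert)
  then show ?case using continuous_on_min[OF assms Suc.IH] by simp
qed

lemma continuous_on_birkhoff_sum:
  fixes f :: "(nat \<Rightarrow> nat) \<Rightarrow> int"
  assumes "continuous_on (shift_space N A) f"
  shows "continuous_on (shift_space N A) (birkhoff_sum f n)"
proof -
  have "continuous_on (shift_space N A) (\<lambda>x. f ((shift ^^ i) x))" for i
    using continuous_on_compose2[OF assms continuous_on_funpow_shift] shift_space_funpow by blast
  then show ?thesis unfolding birkhoff_sum_def by (intro continuous_on_sum) auto
qed

text \<open>If the Birkhoff sums \<open>f\<^sup>n\<close> are nonnegative, the transfer function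
  \<open>u = min {f\<^sup>j | j < n}\<close> makes the cohomologous function \<open>f - u + u \<circ> \<sigma>\<close> nonnegative.\<close>

lemma in_pos_cone_if_birkhoff_sum_nonneg:
  fixes f :: "(nat \<Rightarrow> nat) \<Rightarrow> int"
  assumes cont: "continuous_on (shift_space N A) f" and "0 < n"
    and nonneg: "\<forall>x\<in>shift_space N A. 0 \<le> birkhoff_sum f n x"
  shows "in_pos_cone (shift_space N A) f"
proof -
  let ?X = "shift_space N A"
  obtain n' where n': "n = Suc n'" using \<open>0 < n\<close> gr0_implies_Suc by blast
  define u where "u x = Min ((\<lambda>j. birkhoff_sum f j x) ` {..<n})" for x
  have cont_u: "continuous_on ?X u"
    unfolding u_def n' by (intro continuous_on_Min_image_lessThan continuous_on_birkhoff_sum cont)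
  have cont_u_shift: "continuous_on ?X (\<lambda>x. u (shift x))"
    using continuous_on_compose2[OF cont_u continuous_on_shift] shift_space_shift by blast
  define g where "g x = f x - u x + u (shift x)" for x
  have "continuous_on ?X (\<lambda>x. f x - u x)"
    using cont cont_u by (rule continuous_on_discrete_binop)
  then have "continuous_on ?X g"
    unfolding g_def using cont_u_shift by (rule continuous_on_discrete_binop)
  moreover have "0 \<le> g x" if x: "x \<in> ?X" for x
  proof -
    have fin: "finite ((\<lambda>j. birkhoff_sum f j y) ` {..<n})" for y by simp
    have "u (shift x) \<in> (\<lambda>j. birkhoff_sum f j (shift x)) ` {..<n}"
      unfolding u_def using \<open>0 < n\<close> by (intro Min_in fin) auto
    then obtain j where j: "j < n" "u (shift x) = birkhoff_sum f j (shift x)" by auto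
    have "u x \<le> birkhoff_sum f (Suc j) x"
    proof (cases "Suc j < n")
      case True
      then show ?thesis unfolding u_def by (intro Min_le fin) auto
    next
      case False
      then have "Suc j = n" using j(1) by simp
      moreover have "u x \<le> birkhoff_sum f 0 x"
        unfolding u_def using \<open>0 < n\<close> by (intro Min_le fin) auto
      moreover have "0 \<le> birkhoff_sum f (Suc j) x" using nonneg x \<open>Suc j = n\<close> by simp
      ultimately show ?thesis by (simp add: birkhoff_sum_def)
    qed
    then show ?thesis using j(2) by (simp add: g_def birkhoff_sum_Suc_shift)
  qed
  moreover have "cohomologous ?X f g"
    unfolding cohomologous_def using cont_u by (intro exI[of _ u]) (simp add: g_def)
  ultimately show ?thesis unfolding in_pos_cone_def by blast
qed

lemma order_unit_if_birkhoff_sum_pos: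
  fixes c :: "(nat \<Rightarrow> nat) \<Rightarrow> int"
  assumes cont: "continuous_on (shift_space N A) c" and "0 < n"
    and pos: "\<forall>x\<in>shift_space N A. 1 \<le> birkhoff_sum c n x"
  shows "order_unit (shift_space N A) c"
  unfolding order_unit_def
proof (intro conjI allI impI cont)
  let ?X = "shift_space N A"
  show "in_pos_cone ?X c"
    using pos by (intro in_pos_cone_if_birkhoff_sum_nonneg[OF cont \<open>0 < n\<close>]) force
  fix g :: "(nat \<Rightarrow> nat) \<Rightarrow> int" assume cont_g: "continuous_on ?X g"
  obtain b :: int where b: "0 \<le> b" "\<forall>x\<in>?X. g x \<le> b"
  proof (cases "?X = {}")
    case False
    have "compact (g ` ?X)" by (rule compact_continuous_image[OF cont_g compact_shift_space])
    then obtain b where "\<forall>x\<in>?X. g x \<le> b"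
      using compact_attains_sup[of "g ` ?X"] False by blast
    then show ?thesis by (intro that[of "max b 0"]) force+
  qed (use that in auto)
  define m where "m = nat (int n * b)"
  have "in_pos_cone ?X (\<lambda>x. int m * c x - g x)"
  proof (rule in_pos_cone_if_birkhoff_sum_nonneg[OF _ \<open>0 < n\<close>])
    show "continuous_on ?X (\<lambda>x. int m * c x - g x)"
      using cont cont_g by (rule continuous_on_discrete_binop)
    show "\<forall>x\<in>?X. 0 \<le> birkhoff_sum (\<lambda>x. int m * c x - g x) n x"
    proof
      fix x assume x: "x \<in> ?X"
      have "birkhoff_sum g n x \<le> (\<Sum>i<n. b)"
        unfolding birkhoff_sum_def using b(2) shift_space_funpow[OF x] by (intro sum_mono) blast
      moreover have "int m \<le> int m * birkhoff_sum c n x"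
        using pos x by (simp add: mult_le_cancel_left1)
      moreover have "birkhoff_sum (\<lambda>x. int m * c x - g x) n x = int m * birkhoff_sum c n x - birkhoff_sum g n x"
        by (simp add: birkhoff_sum_def sum_subtractf sum_distrib_left)
      ultimately show "0 \<le> birkhoff_sum (\<lambda>x. int m * c x - g x) n x"
        using b(1) by (simp add: m_def)
    qed
  qed
  then show "\<exists>m::nat. in_pos_cone ?X (\<lambda>x. int m * c x - g x)" by blast
qed

lemma (in admissible_shift) orbit_cocycle_order_unit:
  fixes k l :: "(nat \<Rightarrow> nat) \<Rightarrow> nat"
  assumes "homeomorphism (shift_space M B) X h h'"
    and cont: "continuous_on (shift_space M B) k" "continuous_on (shift_space M B) l"
    and "\<forall>x\<in>shift_space M B. (shift ^^ k x) (h (shift x)) = (shift ^^ l x) (h x)"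
  shows "order_unit (shift_space M B) (\<lambda>x. int (l x) - int (k x))"
proof -
  obtain n where n: "0 < n" "\<forall>x\<in>shift_space M B. birkhoff_sum k n x < birkhoff_sum l n x"
    using orbit_cocycle_birkhoff_sum_less[OF assms] by blast
  have "birkhoff_sum (\<lambda>x. int (l x) - int (k x)) n x = int (birkhoff_sum l n x) - int (birkhoff_sum k n x)" for x
    by (simp add: birkhoff_sum_def sum_subtractf)
  moreover have "continuous_on (shift_space M B) (\<lambda>x. int (l x) - int (k x))"
    using cont(2,1) by (rule continuous_on_discrete_binop)
  ultimately show ?thesis
    using n by (intro order_unit_if_birkhoff_sum_pos) force+
qed

section \<open>Continuous orbit equivalence implies flow equivalence\<close>

lemma susp_triplet_orbit_cocycle:
  fixes k l :: "(nat \<Rightarrow> nat) \<Rightarrow> nat"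
  assumes "continuous_on X k" "continuous_on X l" "order_unit X (\<lambda>x. int (l x) - int (k x))"
  shows "susp_triplet X (\<lambda>x. real (l x)) (\<lambda>x. real (k x)) (\<lambda>_. 0)"
  unfolding susp_triplet_def
proof (intro conjI)
  show "\<exists>c. (\<forall>x\<in>X. real (l x) - real (k x) = real_of_int (c x)) \<and> order_unit X c"
    using assms(3) by (intro exI[of _ "\<lambda>x. int (l x) - int (k x)"]) simp
qed (use assms(1,2) in \<open>auto intro: continuous_intros\<close>)

text \<open>The edge \<open>(x, r) \<sim> (\<sigma> x, r - l x + k x)\<close> of the suspension over \<open>(l, k)\<close> is carried by
  \<open>h \<times> id\<close> into the standard suspension: there both sides are equivalent to
  \<open>(\<sigma>^(l x) (h x), r - l x) = (\<sigma>^(k x) (h (\<sigma> x)), r - l x)\<close>.\<close>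

lemma orbit_cocycle_respects_susp_rel:
  fixes k l :: "(nat \<Rightarrow> nat) \<Rightarrow> nat"
  assumes hX: "\<forall>x\<in>shift_space N A. h x \<in> shift_space M B"
    and rel: "\<forall>x\<in>shift_space N A. (shift ^^ k x) (h (shift x)) = (shift ^^ l x) (h x)"
    and pq: "(p, q) \<in> susp_rel (shift_space N A) (\<lambda>x. real (l x)) (\<lambda>x. real (k x)) (\<lambda>_. 0)"
  shows "((h (fst p), snd p), (h (fst q), snd q)) \<in> std_rel (shift_space M B)"
proof -
  let ?XA = "shift_space N A" and ?XB = "shift_space M B"
  let ?G = "susp_gen ?XA (\<lambda>x. real (l x)) (\<lambda>x. real (k x)) (\<lambda>_. 0)"
  let ?H = "\<lambda>p. (h (fst p), snd p)"
  have edge: "(?H p, ?H q) \<in> std_rel ?XB" if "(p, q) \<in> ?G" for p q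
  proof -
    obtain x r where x: "x \<in> ?XA" "real (l x) \<le> r" and pq: "p = (x, r)" "q = (shift x, r - (real (l x) - real (k x)))"
      using \<open>(p, q) \<in> ?G\<close> unfolding susp_gen_def susp_domain_def by blast
    define s where "s = r - real (l x)"
    have "0 \<le> s" using x(2) unfolding s_def by simp
    have to_l: "((h x, r), ((shift ^^ l x) (h x), s)) \<in> std_rel ?XB"
      using std_rel_funpow_shift[of "h x" M B s "l x"] hX x(1) \<open>0 \<le> s\<close> by (simp add: s_def)
    have "((h (shift x), s + real (k x)), ((shift ^^ k x) (h (shift x)), s)) \<in> std_rel ?XB"
      using hX shift_space_shift[OF x(1)] \<open>0 \<le> s\<close> by (intro std_rel_funpow_shift) auto
    moreover have "s + real (k x) = r - (real (l x) - real (k x))" unfolding s_def by simp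
    ultimately have "((h (shift x), r - (real (l x) - real (k x))), ((shift ^^ l x) (h x), s)) \<in> std_rel ?XB"
      using rel x(1) by simp
    then show ?thesis
      unfolding pq using susp_rel_trans[OF to_l susp_rel_sym] by simp
  qed
  have "(?H p, ?H q) \<in> std_rel ?XB" if "(p, q) \<in> (?G \<union> ?G\<inverse>)\<^sup>*" "p \<in> susp_domain ?XA (\<lambda>_. 0)"
    using that
  proof (induction rule: rtrancl_induct)
    case base
    then show ?case using hX by (intro susp_rel_refl) (auto simp: susp_domain_def)
  next
    case (step q w)
    then have "(?H q, ?H w) \<in> std_rel ?XB" using edge susp_rel_sym by blast
    then show ?case using step.IH step.prems susp_rel_trans by blast
  qed
  then show ?thesis using pq unfolding susp_rel_def by blast
qed

lemma orbit_cocycle_flow_conjugacy: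
  fixes k l :: "(nat \<Rightarrow> nat) \<Rightarrow> nat"
  assumes hom: "homeomorphism (shift_space N A) (shift_space M B) h h'"
    and cont: "continuous_on (shift_space N A) k" "continuous_on (shift_space N A) l"
    and rel: "\<forall>x\<in>shift_space N A. (shift ^^ k x) (h (shift x)) = (shift ^^ l x) (h x)"
    and unit: "order_unit (shift_space N A) (\<lambda>x. int (l x) - int (k x))"
  shows "\<exists>l k b \<Phi>. susp_triplet (shift_space N A) l k b \<and>
       continuous_map (suspension (shift_space N A) l k b) (std_susp (shift_space M B)) \<Phi> \<and>
       (\<forall>t\<ge>0. \<forall>p\<in>topspace (suspension (shift_space N A) l k b).
          \<Phi> (susp_flow (shift_space N A) l k b t p) = std_flow (shift_space M B) t (\<Phi> p)) \<and>
       (\<forall>x\<in>shift_space N A. \<Phi> (susp_class (shift_space N A) l k b x (b x)) = std_base (shift_space M B) (h x))"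
proof (intro exI conjI)
  let ?XA = "shift_space N A" and ?XB = "shift_space M B"
  let ?l = "\<lambda>x. real (l x)" and ?k = "\<lambda>x. real (k x)" and ?b = "\<lambda>_::nat \<Rightarrow> nat. 0 :: real"
  let ?H = "\<lambda>p. (h (fst p), snd p)"
  define \<Phi> where "\<Phi> P = std_rel ?XB `` (?H ` P)" for P
  have hX: "\<forall>x\<in>?XA. h x \<in> ?XB" and cont_h: "continuous_on ?XA h"
    using hom unfolding homeomorphism_def by auto
  have respects: "(?H p, ?H q) \<in> std_rel ?XB" if "(p, q) \<in> susp_rel ?XA ?l ?k ?b" for p q
    using orbit_cocycle_respects_susp_rel[OF hX rel that] .
  have \<Phi>_class: "\<Phi> (susp_class ?XA ?l ?k ?b x r) = std_class ?XB (h x) r"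
    if "(x, r) \<in> susp_domain ?XA ?b" for x r
    unfolding \<Phi>_def susp_class_def
    using quotient_map_class[OF equiv_susp_rel equiv_susp_rel that respects] by simp
  show "susp_triplet ?XA ?l ?k ?b" by (rule susp_triplet_orbit_cocycle[OF cont unit])
  have "continuous_on (susp_domain ?XA ?b) (\<lambda>p. h (fst p))"
    by (rule continuous_on_compose2[OF cont_h continuous_on_fst[OF continuous_on_id]]) (auto simp: susp_domain_def)
  then have "continuous_on (susp_domain ?XA ?b) ?H"
    by (rule continuous_on_Pair[OF _ continuous_on_snd[OF continuous_on_id]])
  then show "continuous_map (suspension ?XA ?l ?k ?b) (std_susp ?XB) \<Phi>"
    unfolding suspension_def \<Phi>_def
    by (rule continuous_map_quotient_top[OF equiv_susp_rel equiv_susp_rel _ respects])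
  show "\<forall>t\<ge>0. \<forall>P\<in>topspace (suspension ?XA ?l ?k ?b).
          \<Phi> (susp_flow ?XA ?l ?k ?b t P) = std_flow ?XB t (\<Phi> P)"
  proof (intro allI impI ballI)
    fix t :: real and P assume t: "0 \<le> t" and P: "P \<in> topspace (suspension ?XA ?l ?k ?b)"
    obtain x r where xr: "(x, r) \<in> susp_domain ?XA ?b" "P = susp_class ?XA ?l ?k ?b x r"
      using P by (rule topspace_suspensionE)
    then have "(x, r + t) \<in> susp_domain ?XA ?b" "(h x, r) \<in> susp_domain ?XB (\<lambda>_. 0)"
      using t hX by (auto simp: susp_domain_def)
    then show "\<Phi> (susp_flow ?XA ?l ?k ?b t P) = std_flow ?XB t (\<Phi> P)"
      using xr t by (simp add: susp_flow_class \<Phi>_class)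
  qed
  show "\<forall>x\<in>?XA. \<Phi> (susp_class ?XA ?l ?k ?b x (?b x)) = std_base ?XB (h x)"
    by (auto simp: \<Phi>_class susp_domain_def)
qed

lemma cont_orbit_equiv_imp_flow_equiv:
  assumes "admissible_matrix N A" "admissible_matrix M B" "cont_orbit_equiv N A M B"
  shows "one_sided_flow_equiv N A M B"
proof -
  let ?XA = "shift_space N A" and ?XB = "shift_space M B"
  from assms(3) obtain h h' and k1 l1 k2 l2 :: "(nat \<Rightarrow> nat) \<Rightarrow> nat" where
    hom: "homeomorphism ?XA ?XB h h'" and
    cont: "continuous_on ?XA k1" "continuous_on ?XA l1" "continuous_on ?XB k2" "continuous_on ?XB l2" and
    rel1: "\<forall>x\<in>?XA. (shift ^^ k1 x) (h (shift x)) = (shift ^^ l1 x) (h x)" and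
    rel2: "\<forall>y\<in>?XB. (shift ^^ k2 y) (h' (shift y)) = (shift ^^ l2 y) (h' y)"
    unfolding cont_orbit_equiv_def Let_def by (elim exE conjE) (rule that; assumption)
  have hom': "homeomorphism ?XB ?XA h' h" using hom by (rule homeomorphism_symD)
  interpret A: admissible_shift N A by unfold_locales (fact assms(1))
  interpret B: admissible_shift M B by unfold_locales (fact assms(2))
  have "order_unit ?XA (\<lambda>x. int (l1 x) - int (k1 x))"
    by (rule B.orbit_cocycle_order_unit[OF hom cont(1,2) rel1])
  from orbit_cocycle_flow_conjugacy[OF hom cont(1,2) rel1 this]
  obtain L1 K1 B1 \<Phi>1 where "susp_triplet ?XA L1 K1 B1"
    "continuous_map (suspension ?XA L1 K1 B1) (std_susp ?XB) \<Phi>1"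
    "\<forall>t\<ge>0. \<forall>p\<in>topspace (suspension ?XA L1 K1 B1).
          \<Phi>1 (susp_flow ?XA L1 K1 B1 t p) = std_flow ?XB t (\<Phi>1 p)"
    "\<forall>x\<in>?XA. \<Phi>1 (susp_class ?XA L1 K1 B1 x (B1 x)) = std_base ?XB (h x)"
    by blast
  moreover have "order_unit ?XB (\<lambda>x. int (l2 x) - int (k2 x))"
    by (rule A.orbit_cocycle_order_unit[OF hom' cont(3,4) rel2])
  from orbit_cocycle_flow_conjugacy[OF hom' cont(3,4) rel2 this]
  obtain L2 K2 B2 \<Phi>2 where "susp_triplet ?XB L2 K2 B2"
    "continuous_map (suspension ?XB L2 K2 B2) (std_susp ?XA) \<Phi>2"
    "\<forall>t\<ge>0. \<forall>p\<in>topspace (suspension ?XB L2 K2 B2).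
          \<Phi>2 (susp_flow ?XB L2 K2 B2 t p) = std_flow ?XA t (\<Phi>2 p)"
    "\<forall>y\<in>?XB. \<Phi>2 (susp_class ?XB L2 K2 B2 y (B2 y)) = std_base ?XA (h' y)"
    by blast
  ultimately show ?thesis
    using hom unfolding one_sided_flow_equiv_def Let_def by blast
qed

theorem theorem3p4:
  fixes N M :: nat and A B :: "nat \<Rightarrow> nat \<Rightarrow> nat"
  assumes "admissible_matrix N A" and "admissible_matrix M B"
  shows "one_sided_flow_equiv N A M B \<longleftrightarrow> cont_orbit_equiv N A M B"
  using flow_equiv_imp_cont_orbit_equiv cont_orbit_equiv_imp_flow_equiv[OF assms] by blast

end
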